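(* Let $(\mathfrak g_1,J_1,\omega_1)$ be a hermitian Lie algebra, let $(\mathfrak g_2,J_2,\omega_2)$ be a hermitian abelian Lie algebra (i.e. $\mathfrak g_2$ has zero bracket, $J_2$ is a complex structure on the vector space $\mathfrak g_2$ and $\omega_2$ a hermitian form for it), and let $\theta:\mathfrak g_1\to\mathrm{End}(\mathfrak g_2)$ be a representation. Form the semidirect product Lie algebra $\mathfrak g=\mathfrak g_1\ltimes_\theta\mathfrak g_2$ (bracket of $\mathfrak g_1$ on $\mathfrak g_1$, $[X,Z]=\theta(X)Z$ for $X\in\mathfrak g_1$, $Z\in\mathfrak g_2$, and $[\mathfrak g_2,\mathfrak g_2]=0$), with $J=J_1\oplus J_2$ and $\omega=\omega_1\oplus\omega_2$. Define $P_\theta\in\mathrm{End}(\mathfrak g_1)$ by $$\omega_1(P_\theta X,Y)=-\tfrac12\operatorname{tr}\big(J_2\theta([X,Y])\big)+\tfrac12\operatorname{tr}\big(\theta(J_1[X,Y])\big),\qquad X,Y\in\mathfrak g_1,$$ and let $P_1$ be the Chern-Ricci operator of $(\mathfrak g_1,J_1,\omega_1)$. Suppose that (1) $[\theta(J_1X),J_2]=J_2[\theta(X),J_2]$ for all $X\in\mathfrak g_1$, and (2) $P_1=cI-P_\theta$ for some $c\in\mathbb R$. Then $(\mathfrak g,J,\omega)$ is a hermitian Lie algebra which is a Chern-Ricci soliton, with Chern-Ricci operator $P$ satisfying $P|_{\mathfrak g_1}=cI$ and $P|_{\mathfrak g_2}=0$. Conversely, every Chern-Ricci soliton $(\mathfrak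 g,J,\omega)$ can be constructed in this way from such data $(\mathfrak g_1,J_1,\omega_1)$, $(\mathfrak g_2,J_2,\omega_2)$, $\theta$ satisfying (1) and (2). Moreover, the constructed $(\mathfrak g,J,\omega)$ is Kähler (and hence a Kähler-Ricci soliton) if and only if $\omega_1$ is closed (i.e. $(\mathfrak g_1,J_1,\omega_1)$ is Kähler) and $\theta(\mathfrak g_1)\subset\mathfrak{sp}(\mathfrak g_2,\omega_2)$, i.e. $\theta(X)^t=J_2\theta(X)J_2$ for all $X\in\mathfrak g_1$.
   Context: A hermitian Lie algebra $(\mathfrak g,J,\omega)$ consists of a real Lie algebra $\mathfrak g$ (of even dimension), a linear map $J$ with $J^2=-I$ which is integrable, i.e. $[JX,JY]=[X,Y]+J[JX,Y]+J[X,JY]$ for all $X,Y\in\mathfrak g$, and a nondegenerate 2-form $\omega$ with $\omega(J\cdot,J\cdot)=\omega$ such that $g=\omega(\cdot,J\cdot)$ is an inner product; it corresponds to a left-invariant hermitian structure on the simply connected Lie group with Lie algebra $\mathfrak g$. Its Chern-Ricci form is $p(X,Y)=-\tfrac12\operatorname{tr}(J\,\mathrm{ad}_{[X,Y]})+\tfrac12\operatorname{tr}(\mathrm{ad}_{J[X,Y]})$ and its Chern-Ricci operator $P$ is defined by $p=\omega(P\cdot,\cdot)$. $(\mathfrak g,J,\omega)$ is a Chern-Ricci soliton if $P=cI+\tfrac12(D+D^t)$ for some $c\in\mathbb R$ and some derivation $D$ of $\mathfrak g$ with $DJ=JD$, where $D^t$ is the transpose with respect to $g$. Transposes in $\mathfrak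 g_2$ are with respect to $\omega_2(\cdot,J_2\cdot)$; $\mathfrak{sp}(\mathfrak g_2,\omega_2)$ is the Lie algebra of $\omega_2$-skew endomorphisms. *)

theory Defs
  imports Complex_Main
begin

text \<open>A finite-dimensional real vector space of dimension n is modelled
as the set fvec n of functions nat => real vanishing at all indices >= n (i.e. R^n).
All maps are only required to behave well on these carriers.\<close>

type_synonym vec = "nat \<Rightarrow> real"

definition fvec :: "nat \<Rightarrow> vec set" where
  "fvec n = {v. \<forall>i\<ge>n. v i = 0}"

definition vzero :: vec where "vzero = (\<lambda>i. 0)"
definition vadd :: "vec \<Rightarrow> vec \<Rightarrow> vec" where "vadd v w = (\<lambda>i. v i + w i)"
definition vsub :: "vec \<Rightarrow> vec \<Rightarrow> vec" where "vsub v w = (\<lambda>i. v i - w i)"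
definition vsmul :: "real \<Rightarrow> vec \<Rightarrow> vec" where "vsmul a v = (\<lambda>i. a * v i)"

definition ebas :: "nat \<Rightarrow> vec" where
  "ebas k = (\<lambda>i. if i = k then 1 else 0)"

definition lin_on :: "nat \<Rightarrow> nat \<Rightarrow> (vec \<Rightarrow> vec) \<Rightarrow> bool" where
  "lin_on n m f \<longleftrightarrow>
     (\<forall>x\<in>fvec n. f x \<in> fvec m) \<and>
     (\<forall>x\<in>fvec n. \<forall>y\<in>fvec n. f (vadd x y) = vadd (f x) (f y)) \<and>
     (\<forall>a. \<forall>x\<in>fvec n. f (vsmul a x) = vsmul a (f x))"

definition bilin_on :: "nat \<Rightarrow> (vec \<Rightarrow> vec \<Rightarrow> real) \<Rightarrow> bool" where
  "bilin_on n b \<longleftrightarrow>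
     (\<forall>x\<in>fvec n. \<forall>y\<in>fvec n. \<forall>z\<in>fvec n. b (vadd x y) z = b x z + b y z \<and> b z (vadd x y) = b z x + b z y) \<and>
     (\<forall>a. \<forall>x\<in>fvec n. \<forall>y\<in>fvec n. b (vsmul a x) y = a * b x y \<and> b x (vsmul a y) = a * b x y)"

definition tr :: "nat \<Rightarrow> (vec \<Rightarrow> vec) \<Rightarrow> real" where
  "tr n A = (\<Sum>i<n. A (ebas i) i)"

definition lie_algebra :: "nat \<Rightarrow> (vec \<Rightarrow> vec \<Rightarrow> vec) \<Rightarrow> bool" where
  "lie_algebra n br \<longleftrightarrow>
     (\<forall>x\<in>fvec n. lin_on n n (br x)) \<and>
     (\<forall>x\<in>fvec n. \<forall>y\<in>fvec n. br x y = vsmul (-1) (br y x)) \<and>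
     (\<forall>x\<in>fvec n. \<forall>y\<in>fvec n. \<forall>z\<in>fvec n.
        vadd (br x (br y z)) (vadd (br y (br z x)) (br z (br x y))) = vzero)"

definition metric :: "(vec \<Rightarrow> vec \<Rightarrow> real) \<Rightarrow> (vec \<Rightarrow> vec) \<Rightarrow> vec \<Rightarrow> vec \<Rightarrow> real" where
  "metric \<omega> J x y = \<omega> x (J y)"

definition hermitian_lie :: "nat \<Rightarrow> (vec \<Rightarrow> vec \<Rightarrow> vec) \<Rightarrow> (vec \<Rightarrow> vec) \<Rightarrow> (vec \<Rightarrow> vec \<Rightarrow> real) \<Rightarrow> bool" where
  "hermitian_lie n br J \<omega> \<longleftrightarrow>
     even n \<and> lie_algebra n br \<and>
     lin_on n n J \<and> (\<forall>x\<in>fvec n. J (J x) = vsmul (-1) x) \<and>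
     (\<forall>x\<in>fvec n. \<forall>y\<in>fvec n.
        br (J x) (J y) = vadd (br x y) (vadd (J (br (J x) y)) (J (br x (J y))))) \<and>
     bilin_on n \<omega> \<and> (\<forall>x\<in>fvec n. \<forall>y\<in>fvec n. \<omega> x y = - \<omega> y x) \<and>
     (\<forall>x\<in>fvec n. (\<forall>y\<in>fvec n. \<omega> x y = 0) \<longrightarrow> x = vzero) \<and>
     (\<forall>x\<in>fvec n. \<forall>y\<in>fvec n. \<omega> (J x) (J y) = \<omega> x y) \<and>
     (\<forall>x\<in>fvec n. \<forall>y\<in>fvec n. metric \<omega> J x y = metric \<omega> J y x) \<and>
     (\<forall>x\<in>fvec n. x \<noteq> vzero \<longrightarrow> metric \<omega> J x x > 0)"

definition closed_form :: "nat \<Rightarrow> (vec \<Rightarrow> vec \<Rightarrow> vec) \<Rightarrow> (vec \<Rightarrow> vec \<Rightarrow> real) \<Rightarrow> bool" where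
  "closed_form n br \<omega> \<longleftrightarrow>
     (\<forall>x\<in>fvec n. \<forall>y\<in>fvec n. \<forall>z\<in>fvec n.
        \<omega> (br x y) z + \<omega> (br y z) x + \<omega> (br z x) y = 0)"

definition kaehler :: "nat \<Rightarrow> (vec \<Rightarrow> vec \<Rightarrow> vec) \<Rightarrow> (vec \<Rightarrow> vec) \<Rightarrow> (vec \<Rightarrow> vec \<Rightarrow> real) \<Rightarrow> bool" where
  "kaehler n br J \<omega> \<longleftrightarrow> hermitian_lie n br J \<omega> \<and> closed_form n br \<omega>"

definition cr_form :: "nat \<Rightarrow> (vec \<Rightarrow> vec \<Rightarrow> vec) \<Rightarrow> (vec \<Rightarrow> vec) \<Rightarrow> vec \<Rightarrow> vec \<Rightarrow> real" where
  "cr_form n br J x y = - (1/2) * tr n (J \<circ> br (br x y)) + (1/2) * tr n (br (J (br x y)))"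

definition cr_operator :: "nat \<Rightarrow> (vec \<Rightarrow> vec \<Rightarrow> vec) \<Rightarrow> (vec \<Rightarrow> vec) \<Rightarrow> (vec \<Rightarrow> vec \<Rightarrow> real) \<Rightarrow> (vec \<Rightarrow> vec) \<Rightarrow> bool" where
  "cr_operator n br J \<omega> P \<longleftrightarrow> lin_on n n P \<and>
     (\<forall>x\<in>fvec n. \<forall>y\<in>fvec n. \<omega> (P x) y = cr_form n br J x y)"

definition derivation :: "nat \<Rightarrow> (vec \<Rightarrow> vec \<Rightarrow> vec) \<Rightarrow> (vec \<Rightarrow> vec) \<Rightarrow> bool" where
  "derivation n br D \<longleftrightarrow> lin_on n n D \<and>
     (\<forall>x\<in>fvec n. \<forall>y\<in>fvec n. D (br x y) = vadd (br (D x) y) (br x (D y)))"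

definition is_transpose :: "nat \<Rightarrow> (vec \<Rightarrow> vec \<Rightarrow> real) \<Rightarrow> (vec \<Rightarrow> vec) \<Rightarrow> (vec \<Rightarrow> vec) \<Rightarrow> bool" where
  "is_transpose n gg A At \<longleftrightarrow> lin_on n n At \<and>
     (\<forall>x\<in>fvec n. \<forall>y\<in>fvec n. gg (A x) y = gg x (At y))"

definition cr_soliton :: "nat \<Rightarrow> (vec \<Rightarrow> vec \<Rightarrow> vec) \<Rightarrow> (vec \<Rightarrow> vec) \<Rightarrow> (vec \<Rightarrow> vec \<Rightarrow> real) \<Rightarrow> bool" where
  "cr_soliton n br J \<omega> \<longleftrightarrow>
     (\<exists>P c D Dt. cr_operator n br J \<omega> P \<and> derivation n br D \<and>
        (\<forall>x\<in>fvec n. D (J x) = J (D x)) \<and>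
        is_transpose n (metric \<omega> J) D Dt \<and>
        (\<forall>x\<in>fvec n. P x = vadd (vsmul c x) (vsmul (1/2) (vadd (D x) (Dt x)))))"

definition representation :: "nat \<Rightarrow> nat \<Rightarrow> (vec \<Rightarrow> vec \<Rightarrow> vec) \<Rightarrow> (vec \<Rightarrow> vec \<Rightarrow> vec) \<Rightarrow> bool" where
  "representation n1 n2 br1 \<theta> \<longleftrightarrow>
     (\<forall>X\<in>fvec n1. lin_on n2 n2 (\<theta> X)) \<and>
     (\<forall>X\<in>fvec n1. \<forall>Y\<in>fvec n1. \<forall>z\<in>fvec n2. \<theta> (vadd X Y) z = vadd (\<theta> X z) (\<theta> Y z)) \<and>
     (\<forall>a. \<forall>X\<in>fvec n1. \<forall>z\<in>fvec n2. \<theta> (vsmul a X) z = vsmul a (\<theta> X z)) \<and>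
     (\<forall>X\<in>fvec n1. \<forall>Y\<in>fvec n1. \<forall>z\<in>fvec n2.
        \<theta> (br1 X Y) z = vsub (\<theta> X (\<theta> Y z)) (\<theta> Y (\<theta> X z)))"

definition zero_br :: "vec \<Rightarrow> vec \<Rightarrow> vec" where "zero_br x y = vzero"

definition P_theta_op :: "nat \<Rightarrow> nat \<Rightarrow> (vec \<Rightarrow> vec \<Rightarrow> vec) \<Rightarrow> (vec \<Rightarrow> vec) \<Rightarrow> (vec \<Rightarrow> vec \<Rightarrow> real)
     \<Rightarrow> (vec \<Rightarrow> vec) \<Rightarrow> (vec \<Rightarrow> vec \<Rightarrow> vec) \<Rightarrow> (vec \<Rightarrow> vec) \<Rightarrow> bool" where
  "P_theta_op n1 n2 br1 J1 \<omega>1 J2 \<theta> P \<longleftrightarrow> lin_on n1 n1 P \<and>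
     (\<forall>X\<in>fvec n1. \<forall>Y\<in>fvec n1.
        \<omega>1 (P X) Y = - (1/2) * tr n2 (J2 \<circ> \<theta> (br1 X Y)) + (1/2) * tr n2 (\<theta> (J1 (br1 X Y))))"

text \<open>direct sum g1 (+) g2 realised on fvec (n1+n2): first n1 coordinates for g1\<close>
definition join :: "nat \<Rightarrow> vec \<Rightarrow> vec \<Rightarrow> vec" where
  "join n1 x z = (\<lambda>i. if i < n1 then x i else z (i - n1))"
definition pr1 :: "nat \<Rightarrow> vec \<Rightarrow> vec" where
  "pr1 n1 v = (\<lambda>i. if i < n1 then v i else 0)"
definition pr2 :: "nat \<Rightarrow> vec \<Rightarrow> vec" where
  "pr2 n1 v = (\<lambda>i. v (i + n1))"

definition sd_br :: "nat \<Rightarrow> (vec \<Rightarrow> vec \<Rightarrow> vec) \<Rightarrow> (vec \<Rightarrow> vec \<Rightarrow> vec) \<Rightarrow> vec \<Rightarrow> vec \<Rightarrow> vec" where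
  "sd_br n1 br1 \<theta> v w = join n1 (br1 (pr1 n1 v) (pr1 n1 w))
      (vsub (\<theta> (pr1 n1 v) (pr2 n1 w)) (\<theta> (pr1 n1 w) (pr2 n1 v)))"
definition sd_J :: "nat \<Rightarrow> (vec \<Rightarrow> vec) \<Rightarrow> (vec \<Rightarrow> vec) \<Rightarrow> vec \<Rightarrow> vec" where
  "sd_J n1 J1 J2 v = join n1 (J1 (pr1 n1 v)) (J2 (pr2 n1 v))"
definition sd_\<omega> :: "nat \<Rightarrow> (vec \<Rightarrow> vec \<Rightarrow> real) \<Rightarrow> (vec \<Rightarrow> vec \<Rightarrow> real) \<Rightarrow> vec \<Rightarrow> vec \<Rightarrow> real" where
  "sd_\<omega> n1 \<omega>1 \<omega>2 v w = \<omega>1 (pr1 n1 v) (pr1 n1 w) + \<omega>2 (pr2 n1 v) (pr2 n1 w)"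

definition herm_iso :: "nat \<Rightarrow> (vec \<Rightarrow> vec \<Rightarrow> vec) \<Rightarrow> (vec \<Rightarrow> vec) \<Rightarrow> (vec \<Rightarrow> vec \<Rightarrow> real)
   \<Rightarrow> nat \<Rightarrow> (vec \<Rightarrow> vec \<Rightarrow> vec) \<Rightarrow> (vec \<Rightarrow> vec) \<Rightarrow> (vec \<Rightarrow> vec \<Rightarrow> real) \<Rightarrow> (vec \<Rightarrow> vec) \<Rightarrow> bool" where
  "herm_iso n br J \<omega> m br' J' \<omega>' \<phi> \<longleftrightarrow>
     lin_on n m \<phi> \<and> bij_betw \<phi> (fvec n) (fvec m) \<and>
     (\<forall>x\<in>fvec n. \<forall>y\<in>fvec n. \<phi> (br x y) = br' (\<phi> x) (\<phi> y)) \<and>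
     (\<forall>x\<in>fvec n. \<phi> (J x) = J' (\<phi> x)) \<and>
     (\<forall>x\<in>fvec n. \<forall>y\<in>fvec n. \<omega>' (\<phi> x) (\<phi> y) = \<omega> x y)"

definition cond1 :: "nat \<Rightarrow> nat \<Rightarrow> (vec \<Rightarrow> vec) \<Rightarrow> (vec \<Rightarrow> vec) \<Rightarrow> (vec \<Rightarrow> vec \<Rightarrow> vec) \<Rightarrow> bool" where
  "cond1 n1 n2 J1 J2 \<theta> \<longleftrightarrow>
     (\<forall>X\<in>fvec n1. \<forall>z\<in>fvec n2.
        vsub (\<theta> (J1 X) (J2 z)) (J2 (\<theta> (J1 X) z)) = J2 (vsub (\<theta> X (J2 z)) (J2 (\<theta> X z))))"

definition cond2 :: "nat \<Rightarrow> nat \<Rightarrow> (vec \<Rightarrow> vec \<Rightarrow> vec) \<Rightarrow> (vec \<Rightarrow> vec) \<Rightarrow> (vec \<Rightarrow> vec \<Rightarrow> real)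
     \<Rightarrow> (vec \<Rightarrow> vec) \<Rightarrow> (vec \<Rightarrow> vec \<Rightarrow> vec) \<Rightarrow> real \<Rightarrow> bool" where
  "cond2 n1 n2 br1 J1 \<omega>1 J2 \<theta> c \<longleftrightarrow>
     (\<exists>P1 P\<theta>. cr_operator n1 br1 J1 \<omega>1 P1 \<and> P_theta_op n1 n2 br1 J1 \<omega>1 J2 \<theta> P\<theta> \<and>
        (\<forall>X\<in>fvec n1. P1 X = vsub (vsmul c X) (P\<theta> X)))"

definition in_sp :: "nat \<Rightarrow> (vec \<Rightarrow> vec \<Rightarrow> real) \<Rightarrow> (vec \<Rightarrow> vec) \<Rightarrow> bool" where
  "in_sp n \<omega> A \<longleftrightarrow> (\<forall>x\<in>fvec n. \<forall>y\<in>fvec n. \<omega> (A x) y + \<omega> x (A y) = 0)"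

end

theory Submission
  imports Defs
begin

text \<open>
  For the construction: \<open>J\<close> and \<open>\<omega>\<close> split, \<open>ad\<close> of an element of the abelian ideal
  \<open>g\<^sub>2\<close> is traceless, so the Chern--Ricci form of \<open>g\<^sub>1 \<ltimes>\<^sub>\<theta> g\<^sub>2\<close> only sees the
  \<open>g\<^sub>1\<close>-components and equals \<open>\<omega>\<^sub>1((P\<^sub>1 + P\<^sub>\<theta>)\<cdot>,\<cdot>) = c\<omega>\<^sub>1\<close> there. Thus
  \<open>P = cI \<oplus> 0 = cI + D\<close> with the \<open>J\<close>-linear symmetric derivation \<open>D = 0 \<oplus> (-c)I\<close>.
  Closedness of \<open>\<omega>\<close> splits into closedness of \<open>\<omega>\<^sub>1\<close> and \<open>\<omega>\<^sub>2\<close>-skewness of \<open>\<theta>\<close>.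

  For the converse, let \<open>P = cI + S\<close> with \<open>S = (D + D\<^sup>t)/2\<close>, \<open>A = (D - D\<^sup>t)/2\<close>.
  Since \<open>ad\<^sub>D\<^sub>U = [D, ad\<^sub>U]\<close> and \<open>DJ = JD\<close>, the Chern--Ricci form is killed by
  derivations, i.e. \<open>PD = -D\<^sup>tP\<close>. This says that the symmetric operator \<open>S\<^sup>2 + cS\<close> equals
  the commutator \<open>[A,S]/2\<close>, so its square is traceless and it vanishes: \<open>S\<^sup>2 = -cS\<close> and
  \<open>[A,S] = 0\<close>. Hence \<open>g = ker S \<oplus> im S\<close>, on which \<open>D\<close> acts as \<open>A\<close> and \<open>A - c\<close>.
  As \<open>A\<close> is skew, a bracket component between these eigenspaces can only be nonzero if the
  \<open>D\<close>-eigenvalues add up, so \<open>ker S\<close> is a subalgebra and \<open>im S\<close> an abelian ideal, both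
  \<open>J\<close>-invariant. \<open>J\<close>-adapted orthonormal bases of the two pieces exhibit \<open>g\<close> as
  \<open>ker S \<ltimes> im S\<close>, where \<open>P\<close> is \<open>c\<close> on \<open>ker S\<close> and \<open>0\<close> on \<open>im S\<close>.
\<close>

section \<open>Coordinate vectors, linear maps and traces\<close>

lemmas vec_defs = vadd_def vsub_def vsmul_def vzero_def

lemma fvec_zero[simp]: "vzero \<in> fvec n" by (simp add: fvec_def vzero_def)
lemma fvec_add[simp]: "x \<in> fvec n \<Longrightarrow> y \<in> fvec n \<Longrightarrow> vadd x y \<in> fvec n" by (simp add: fvec_def vadd_def)
lemma fvec_sub[simp]: "x \<in> fvec n \<Longrightarrow> y \<in> fvec n \<Longrightarrow> vsub x y \<in> fvec n" by (simp add: fvec_def vsub_def)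
lemma fvec_smul[simp]: "x \<in> fvec n \<Longrightarrow> vsmul a x \<in> fvec n" by (simp add: fvec_def vsmul_def)
lemma fvec_ebas[simp]: "k < n \<Longrightarrow> ebas k \<in> fvec n" by (simp add: fvec_def ebas_def)

lemma vsub_eq: "vsub x y = vadd x (vsmul (-1) y)" by (simp add: vec_defs)
lemma vsub_zero[simp]: "vsub x vzero = x" by (simp add: vec_defs)
lemma vadd_zero[simp]: "vadd x vzero = x" "vadd vzero x = x" by (simp_all add: vec_defs)
lemma vsmul_vzero[simp]: "vsmul a vzero = vzero" by (simp add: vec_defs)
lemma vsmul_0[simp]: "vsmul 0 x = vzero" by (simp add: vec_defs)

definition vsum :: "'a set \<Rightarrow> ('a \<Rightarrow> real) \<Rightarrow> ('a \<Rightarrow> vec) \<Rightarrow> vec" where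
  "vsum K a v = (\<lambda>i. \<Sum>k\<in>K. a k * v k i)"

lemma fvec_vsum[simp]: "(\<And>k. k \<in> K \<Longrightarrow> v k \<in> fvec n) \<Longrightarrow> vsum K a v \<in> fvec n"
  by (auto simp: fvec_def vsum_def intro!: sum.neutral)

lemma vsum_empty[simp]: "vsum {} a v = vzero" by (simp add: vsum_def vzero_def)

lemma vsum_insert: "finite K \<Longrightarrow> k \<notin> K \<Longrightarrow> vsum (insert k K) a v = vadd (vsmul (a k) (v k)) (vsum K a v)"
  by (simp add: vsum_def vadd_def vsmul_def)

lemma vsum_closed:
  assumes "vzero \<in> W" and "\<And>x y. x \<in> W \<Longrightarrow> y \<in> W \<Longrightarrow> vadd x y \<in> W"
    and "\<And>a x. x \<in> W \<Longrightarrow> vsmul a x \<in> W"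
  shows "finite K \<Longrightarrow> (\<And>k. k \<in> K \<Longrightarrow> v k \<in> W) \<Longrightarrow> vsum K a v \<in> W"
  by (induction K rule: finite_induct) (simp_all add: assms vsum_insert)

lemma fvec_expand: "x \<in> fvec n \<Longrightarrow> x = vsum {..<n} x ebas"
proof
  fix i assume x: "x \<in> fvec n"
  have "(\<Sum>k<n. x k * ebas k i) = (if i < n then x i else 0)"
    by (auto simp: ebas_def if_distrib cong: if_cong)
  thus "x i = vsum {..<n} x ebas i" using x by (auto simp: vsum_def fvec_def)
qed

lemma lin_in: "lin_on n m f \<Longrightarrow> x \<in> fvec n \<Longrightarrow> f x \<in> fvec m" by (simp add: lin_on_def)
lemma lin_add: "lin_on n m f \<Longrightarrow> x \<in> fvec n \<Longrightarrow> y \<in> fvec n \<Longrightarrow> f (vadd x y) = vadd (f x) (f y)"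
  by (simp add: lin_on_def)
lemma lin_smul: "lin_on n m f \<Longrightarrow> x \<in> fvec n \<Longrightarrow> f (vsmul a x) = vsmul a (f x)" by (simp add: lin_on_def)

lemma lin_zero: "lin_on n m f \<Longrightarrow> f vzero = vzero"
  using lin_smul[of n m f vzero 0] fvec_zero[of n] by (simp add: vec_defs)

lemma lin_sub: "lin_on n m f \<Longrightarrow> x \<in> fvec n \<Longrightarrow> y \<in> fvec n \<Longrightarrow> f (vsub x y) = vsub (f x) (f y)"
  by (simp add: vsub_eq lin_add lin_smul)

lemmas lin_simps = lin_in lin_add lin_smul lin_sub lin_zero

lemma lin_comp: "lin_on n m f \<Longrightarrow> lin_on m k g \<Longrightarrow> lin_on n k (g \<circ> f)"
  by (simp add: lin_on_def)

lemma lin_vsum: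
  assumes "lin_on n m f"
  shows "finite K \<Longrightarrow> (\<And>k. k \<in> K \<Longrightarrow> v k \<in> fvec n) \<Longrightarrow> f (vsum K a v) = vsum K a (\<lambda>k. f (v k))"
  by (induction K rule: finite_induct) (simp_all add: vsum_insert lin_simps[OF assms])

lemma lin_fixes_vsum:
  assumes "lin_on n n f" "finite K" "\<And>k. k \<in> K \<Longrightarrow> v k \<in> fvec n" "\<And>k. k \<in> K \<Longrightarrow> f (v k) = v k"
  shows "f (vsum K a v) = vsum K a v"
  using lin_vsum[OF assms(1,2), of v a] assms(3,4) by (simp add: vsum_def)

lemma lin_expand: "lin_on n m f \<Longrightarrow> x \<in> fvec n \<Longrightarrow> f x i = (\<Sum>k<n. x k * f (ebas k) i)"
  using lin_vsum[of n m f "{..<n}" ebas x] fvec_expand[of x n] by (simp add: vsum_def)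

lemma linear_functional_vsum:
  assumes "\<forall>y\<in>fvec n. \<forall>y'\<in>fvec n. f (vadd y y') = f y + f y'" and "\<forall>a. \<forall>y\<in>fvec n. f (vsmul a y) = a * f y"
  shows "finite K \<Longrightarrow> (\<And>k. k \<in> K \<Longrightarrow> v k \<in> fvec n) \<Longrightarrow> f (vsum K a v) = (\<Sum>k\<in>K. a k * f (v k))"
proof (induction K rule: finite_induct)
  case empty
  have "f vzero = f (vsmul 0 vzero)" by (simp add: vec_defs)
  also have "\<dots> = 0" using assms(2) by (simp del: vsmul_vzero vsmul_0)
  finally show ?case by simp
next
  case (insert k K) thus ?case using assms by (simp add: vsum_insert)
qed

lemma tr_cong: "(\<And>x. x \<in> fvec n \<Longrightarrow> A x = B x) \<Longrightarrow> tr n A = tr n B"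
  by (simp add: tr_def)
lemma tr_add: "tr n (\<lambda>x. vadd (A x) (B x)) = tr n A + tr n B"
  by (simp add: tr_def vadd_def sum.distrib)
lemma tr_sub: "tr n (\<lambda>x. vsub (A x) (B x)) = tr n A - tr n B"
  by (simp add: tr_def vsub_def sum_subtractf)
lemma tr_smul: "tr n (\<lambda>x. vsmul a (A x)) = a * tr n A"
  by (simp add: tr_def vsmul_def sum_distrib_left)

lemma tr_comp_commute:
  assumes F: "lin_on n m F" and G: "lin_on m n G"
  shows "tr m (F \<circ> G) = tr n (G \<circ> F)"
proof -
  have "tr m (F \<circ> G) = (\<Sum>k<m. \<Sum>i<n. G (ebas k) i * F (ebas i) k)"
    unfolding tr_def comp_def by (intro sum.cong refl lin_expand[OF F] lin_in[OF G]) simp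
  also have "\<dots> = (\<Sum>i<n. \<Sum>k<m. F (ebas i) k * G (ebas k) i)"
    by (subst sum.swap) (simp add: mult.commute)
  also have "\<dots> = tr n (G \<circ> F)"
    unfolding tr_def comp_def by (intro sum.cong refl lin_expand[OF G, symmetric] lin_in[OF F]) simp
  finally show ?thesis .
qed

lemma tr_commutator:
  assumes "lin_on n n A" "lin_on n n B"
  shows "tr n (\<lambda>z. vsub (A (B z)) (B (A z))) = 0"
  using tr_sub[of n "A \<circ> B" "B \<circ> A"] tr_comp_commute[OF assms(2,1)] by (simp add: comp_def)

lemma tr_conjugate:
  assumes \<phi>: "lin_on n m \<phi>" and \<psi>: "lin_on m n \<psi>" and \<psi>\<phi>: "\<And>x. x \<in> fvec n \<Longrightarrow> \<psi> (\<phi> x) = x"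
    and F: "lin_on n n F" and F': "\<And>z. z \<in> fvec m \<Longrightarrow> F' z = \<phi> (F (\<psi> z))"
  shows "tr m F' = tr n F"
proof -
  have "tr m F' = tr m (\<phi> \<circ> (F \<circ> \<psi>))" by (rule tr_cong) (simp add: F')
  also have "\<dots> = tr n ((F \<circ> \<psi>) \<circ> \<phi>)" by (rule tr_comp_commute[OF \<phi> lin_comp[OF \<psi> F]])
  also have "\<dots> = tr n F" by (rule tr_cong) (simp add: \<psi>\<phi>)
  finally show ?thesis .
qed

lemma bilin_add1: "bilin_on n b \<Longrightarrow> x \<in> fvec n \<Longrightarrow> y \<in> fvec n \<Longrightarrow> z \<in> fvec n \<Longrightarrow> b (vadd x y) z = b x z + b y z"
  and bilin_add2: "bilin_on n b \<Longrightarrow> x \<in> fvec n \<Longrightarrow> y \<in> fvec n \<Longrightarrow> z \<in> fvec n \<Longrightarrow> b z (vadd x y) = b z x + b z y"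
  and bilin_smul1: "bilin_on n b \<Longrightarrow> x \<in> fvec n \<Longrightarrow> y \<in> fvec n \<Longrightarrow> b (vsmul a x) y = a * b x y"
  and bilin_smul2: "bilin_on n b \<Longrightarrow> x \<in> fvec n \<Longrightarrow> y \<in> fvec n \<Longrightarrow> b x (vsmul a y) = a * b x y"
  unfolding bilin_on_def by blast+

lemma bilin_sub1: "bilin_on n b \<Longrightarrow> x \<in> fvec n \<Longrightarrow> y \<in> fvec n \<Longrightarrow> z \<in> fvec n \<Longrightarrow> b (vsub x y) z = b x z - b y z"
  and bilin_sub2: "bilin_on n b \<Longrightarrow> x \<in> fvec n \<Longrightarrow> y \<in> fvec n \<Longrightarrow> z \<in> fvec n \<Longrightarrow> b z (vsub x y) = b z x - b z y"
  by (simp_all add: vsub_eq bilin_add1 bilin_add2 bilin_smul1 bilin_smul2)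

lemma bilin_zero1: "bilin_on n b \<Longrightarrow> x \<in> fvec n \<Longrightarrow> b vzero x = 0"
  and bilin_zero2: "bilin_on n b \<Longrightarrow> x \<in> fvec n \<Longrightarrow> b x vzero = 0"
  using bilin_smul1[of n b vzero x 0] bilin_smul2[of n b x vzero 0] fvec_zero[of n] by (simp_all add: vec_defs)

lemmas bilin_simps = bilin_add1 bilin_add2 bilin_smul1 bilin_smul2 bilin_sub1 bilin_sub2 bilin_zero1 bilin_zero2

section \<open>Direct sums\<close>

lemma pr1_in[simp]: "pr1 n1 v \<in> fvec n1" by (simp add: fvec_def pr1_def)
lemma pr2_in[simp]: "v \<in> fvec (n1+n2) \<Longrightarrow> pr2 n1 v \<in> fvec n2" by (simp add: fvec_def pr2_def)
lemma join_in[simp]: "Z \<in> fvec n2 \<Longrightarrow> join n1 X Z \<in> fvec (n1+n2)"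
  by (auto simp: fvec_def join_def)
lemma pr1_join[simp]: "X \<in> fvec n1 \<Longrightarrow> pr1 n1 (join n1 X Z) = X"
  by (auto simp: fvec_def join_def pr1_def)
lemma pr2_join[simp]: "pr2 n1 (join n1 X Z) = Z"
  by (auto simp: join_def pr2_def)
lemma join_pr[simp]: "join n1 (pr1 n1 v) (pr2 n1 v) = v"
  by (auto simp: join_def pr1_def pr2_def)
lemma join_add: "vadd (join n1 X Z) (join n1 Y W) = join n1 (vadd X Y) (vadd Z W)"
  by (auto simp: join_def vadd_def)
lemma join_sub: "vsub (join n1 X Z) (join n1 Y W) = join n1 (vsub X Y) (vsub Z W)"
  by (auto simp: join_def vsub_def)
lemma join_smul: "vsmul a (join n1 X Z) = join n1 (vsmul a X) (vsmul a Z)"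
  by (auto simp: join_def vsmul_def)
lemma join_zero: "join n1 vzero vzero = vzero"
  by (auto simp: join_def vzero_def)
lemmas join_ops = join_add join_sub join_smul join_zero

lemma join_eq_iff: "X \<in> fvec n1 \<Longrightarrow> Y \<in> fvec n1 \<Longrightarrow> join n1 X Z = join n1 Y W \<longleftrightarrow> X = Y \<and> Z = W"
  by (metis pr1_join pr2_join)

lemma fvec_add_cases:
  assumes "v \<in> fvec (n1+n2)"
  obtains X Z where "X \<in> fvec n1" "Z \<in> fvec n2" "v = join n1 X Z"
  using assms by (metis join_pr pr1_in pr2_in)

lemma ball_fvec_add: "(\<forall>v\<in>fvec (n1+n2). P v) \<longleftrightarrow> (\<forall>X\<in>fvec n1. \<forall>Z\<in>fvec n2. P (join n1 X Z))"
  by (metis fvec_add_cases join_in)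

lemma join_first: "i < n1 \<Longrightarrow> join n1 X Z i = X i" by (simp add: join_def)
lemma join_second: "join n1 X Z (n1+i) = Z i" by (simp add: join_def)

lemma ebas_first: "i < n1 \<Longrightarrow> ebas i = join n1 (ebas i) vzero"
  by (auto simp: ebas_def join_def vzero_def)
lemma ebas_second: "ebas (n1+i) = join n1 vzero (ebas i)"
  by (auto simp: ebas_def join_def vzero_def fun_eq_iff)

lemma sum_lessThan_add: "(\<Sum>k<(m1::nat) + m2. f k) = (\<Sum>k<m1. f k) + (\<Sum>k<m2. f (m1 + k))"
  by (induct m2) (simp_all add: add.assoc)

lemma tr_fvec_add:
  "tr (n1+n2) M = (\<Sum>i<n1. M (join n1 (ebas i) vzero) i) + (\<Sum>i<n2. M (join n1 vzero (ebas i)) (n1+i))"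
proof -
  have "tr (n1+n2) M = (\<Sum>i<n1. M (ebas i) i) + (\<Sum>i\<in>{n1..<n1+n2}. M (ebas i) i)"
    unfolding tr_def by (subst sum.union_disjoint[symmetric]) (auto intro!: sum.cong)
  also have "(\<Sum>i\<in>{n1..<n1+n2}. M (ebas i) i) = (\<Sum>i<n2. M (ebas (n1+i)) (n1+i))"
    by (rule sum.reindex_bij_witness[of _ "\<lambda>i. n1+i" "\<lambda>i. i - n1"]) auto
  finally show ?thesis using ebas_first ebas_second by simp
qed

section \<open>Inner product spaces and orthonormal lists\<close>

locale inner_product =
  fixes n :: nat and g :: "vec \<Rightarrow> vec \<Rightarrow> real"
  assumes g_bilin: "bilin_on n g" and g_sym: "x \<in> fvec n \<Longrightarrow> y \<in> fvec n \<Longrightarrow> g x y = g y x"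
    and g_pos: "x \<in> fvec n \<Longrightarrow> x \<noteq> vzero \<Longrightarrow> g x x > 0"
begin

abbreviation "V \<equiv> fvec n"

lemmas g_simps[simp] = bilin_simps[OF g_bilin]

lemma g_nonneg: "x \<in> V \<Longrightarrow> g x x \<ge> 0" using g_pos[of x] by (cases "x = vzero") auto
lemma g_self_eq_0: "x \<in> V \<Longrightarrow> g x x = 0 \<Longrightarrow> x = vzero" using g_pos[of x] by force

lemma g_vsum: assumes "finite K" "\<And>k. k \<in> K \<Longrightarrow> v k \<in> V" "y \<in> V"
  shows "g (vsum K a v) y = (\<Sum>k\<in>K. a k * g (v k) y)"
  using assms by (induction K rule: finite_induct) (simp_all add: vsum_insert)

definition orthonormal :: "vec list \<Rightarrow> bool" where
  "orthonormal bs \<longleftrightarrow> set bs \<subseteq> V \<and> (\<forall>i<length bs. \<forall>j<length bs. g (bs!i) (bs!j) = (if i = j then 1 else 0))"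

definition proj :: "vec list \<Rightarrow> vec \<Rightarrow> vec" where
  "proj bs x = vsum {..<length bs} (\<lambda>k. g x (bs!k)) (\<lambda>k. bs!k)"

definition onb :: "vec list \<Rightarrow> bool" where "onb bs \<longleftrightarrow> orthonormal bs \<and> (\<forall>x\<in>V. proj bs x = x)"

lemma orthonormal_in: "orthonormal bs \<Longrightarrow> k < length bs \<Longrightarrow> bs!k \<in> V"
  unfolding orthonormal_def by auto
lemma orthonormal_g: "orthonormal bs \<Longrightarrow> i < length bs \<Longrightarrow> j < length bs \<Longrightarrow> g (bs!i) (bs!j) = (if i = j then 1 else 0)"
  unfolding orthonormal_def by auto

lemma orthonormal_append_iff:
  "orthonormal (bs @ cs) \<longleftrightarrow> orthonormal bs \<and> orthonormal cs \<and>
     (\<forall>i<length bs. \<forall>j<length cs. g (bs!i) (cs!j) = 0)"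
proof
  assume on: "orthonormal (bs @ cs)"
  have "orthonormal bs" unfolding orthonormal_def
  proof (intro conjI allI impI)
    show "set bs \<subseteq> V" using on unfolding orthonormal_def by auto
    fix i j assume "i < length bs" "j < length bs"
    thus "g (bs!i) (bs!j) = (if i = j then 1 else 0)" using orthonormal_g[OF on, of i j] by (simp add: nth_append)
  qed
  moreover have "orthonormal cs" unfolding orthonormal_def
  proof (intro conjI allI impI)
    show "set cs \<subseteq> V" using on unfolding orthonormal_def by auto
    fix i j assume "i < length cs" "j < length cs"
    thus "g (cs!i) (cs!j) = (if i = j then 1 else 0)"
      using orthonormal_g[OF on, of "length bs + i" "length bs + j"] by (simp add: nth_append)
  qed
  moreover have "\<forall>i<length bs. \<forall>j<length cs. g (bs!i) (cs!j) = 0"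
  proof (intro allI impI)
    fix i j assume "i < length bs" "j < length cs"
    thus "g (bs!i) (cs!j) = 0" using orthonormal_g[OF on, of i "length bs + j"] by (simp add: nth_append)
  qed
  ultimately show "orthonormal bs \<and> orthonormal cs \<and> (\<forall>i<length bs. \<forall>j<length cs. g (bs!i) (cs!j) = 0)" by blast
next
  assume a: "orthonormal bs \<and> orthonormal cs \<and> (\<forall>i<length bs. \<forall>j<length cs. g (bs!i) (cs!j) = 0)"
  hence bV: "\<And>k. k < length bs \<Longrightarrow> bs!k \<in> V" and cV: "\<And>k. k < length cs \<Longrightarrow> cs!k \<in> V"
    using orthonormal_in by blast+
  show "orthonormal (bs @ cs)" unfolding orthonormal_def
  proof (intro conjI allI impI)
    show "set (bs @ cs) \<subseteq> V" using a unfolding orthonormal_def by auto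
    fix i j assume ij: "i < length (bs @ cs)" "j < length (bs @ cs)"
    show "g ((bs @ cs) ! i) ((bs @ cs) ! j) = (if i = j then 1 else 0)"
    proof (cases "i < length bs"; cases "j < length bs")
      assume "i < length bs" "j < length bs" thus ?thesis using a orthonormal_g by (simp add: nth_append)
    next
      assume "i < length bs" "\<not> j < length bs" thus ?thesis using a ij by (simp add: nth_append)
    next
      assume "\<not> i < length bs" "j < length bs"
      thus ?thesis using a ij g_sym[OF bV[of j] cV[of "i - length bs"]] by (simp add: nth_append)
    next
      assume "\<not> i < length bs" "\<not> j < length bs"
      thus ?thesis using a ij orthonormal_g[of cs "i - length bs" "j - length bs"] by (auto simp: nth_append)
    qed
  qed
qed

lemma proj_in[simp]: "orthonormal bs \<Longrightarrow> proj bs x \<in> V"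
  unfolding proj_def by (intro fvec_vsum) (simp add: orthonormal_in)

lemma g_proj: assumes "orthonormal bs" "j < length bs" "x \<in> V" shows "g (proj bs x) (bs!j) = g x (bs!j)"
proof -
  have "g (proj bs x) (bs!j) = (\<Sum>k<length bs. g x (bs!k) * g (bs!k) (bs!j))"
    unfolding proj_def using assms by (subst g_vsum) (auto intro: orthonormal_in)
  also have "\<dots> = (\<Sum>k<length bs. if k = j then g x (bs!j) else 0)"
    using assms by (intro sum.cong) (auto simp: orthonormal_g)
  finally show ?thesis using assms by simp
qed

lemma proj_member: assumes "orthonormal bs" "j < length bs" shows "proj bs (bs!j) = bs!j"
proof
  fix i
  have "proj bs (bs!j) i = (\<Sum>k<length bs. if k = j then (bs!j) i else 0)"
    unfolding proj_def vsum_def using assms by (intro sum.cong) (auto simp: orthonormal_g)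
  thus "proj bs (bs!j) i = (bs!j) i" using assms by simp
qed

lemma proj_lin: assumes on: "orthonormal bs" shows "lin_on n n (proj bs)"
  unfolding lin_on_def
proof (intro conjI ballI allI)
  fix x y assume xy: "x \<in> V" "y \<in> V"
  have "proj bs (vadd x y) = vsum {..<length bs} (\<lambda>k. g x (bs!k) + g y (bs!k)) (\<lambda>k. bs!k)"
    unfolding proj_def vsum_def using on xy by (intro ext sum.cong) (simp_all add: orthonormal_in)
  thus "proj bs (vadd x y) = vadd (proj bs x) (proj bs y)"
    unfolding proj_def vsum_def vadd_def by (simp add: algebra_simps sum.distrib)
next
  fix a x assume x: "x \<in> V"
  have "proj bs (vsmul a x) = vsum {..<length bs} (\<lambda>k. a * g x (bs!k)) (\<lambda>k. bs!k)"
    unfolding proj_def vsum_def using on x by (intro ext sum.cong) (simp_all add: orthonormal_in)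
  thus "proj bs (vsmul a x) = vsmul a (proj bs x)"
    unfolding proj_def vsum_def vsmul_def by (simp add: algebra_simps sum_distrib_left)
qed (use on in simp)

lemma proj_idem: assumes "orthonormal bs" "x \<in> V" shows "proj bs (proj bs x) = proj bs x"
  unfolding proj_def[of bs "proj bs x"] using g_proj[OF assms(1) _ assms(2)]
  by (simp add: proj_def[of bs x] vsum_def)

lemma g_orth_proj_fixed:
  assumes "orthonormal bs" "x \<in> V" "proj bs x = x" "y \<in> V" "\<And>k. k < length bs \<Longrightarrow> g (bs!k) y = 0"
  shows "g x y = 0"
proof -
  have "g x y = g (proj bs x) y" using assms by simp
  also have "\<dots> = (\<Sum>k<length bs. g x (bs!k) * g (bs!k) y)"
    unfolding proj_def using assms by (subst g_vsum) (auto intro: orthonormal_in)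
  finally show ?thesis using assms by simp
qed

lemma proj_orth: assumes "x \<in> V" "\<And>k. k < length bs \<Longrightarrow> g x (bs!k) = 0" shows "proj bs x = vzero"
  unfolding proj_def vsum_def vzero_def using assms by simp

lemma proj_append: "proj (bs @ cs) x = vadd (proj bs x) (proj cs x)"
  unfolding proj_def vsum_def vadd_def
  by (rule ext, simp only: length_append sum_lessThan_add) (simp add: nth_append)

lemma proj_append_fixed1:
  assumes on: "orthonormal (bs @ cs)" and x: "x \<in> V" "proj bs x = x" shows "proj (bs @ cs) x = x"
proof -
  have bs: "orthonormal bs" and cs: "orthonormal cs" and orth: "\<forall>i<length bs. \<forall>j<length cs. g (bs!i) (cs!j) = 0"
    using on orthonormal_append_iff by blast+
  have "g x (cs!j) = 0" if "j < length cs" for j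
    using g_orth_proj_fixed[OF bs x] orth that orthonormal_in[OF cs] by blast
  thus ?thesis using proj_append[of bs cs x] proj_orth[OF x(1)] x by simp
qed

lemma proj_append_fixed2:
  assumes on: "orthonormal (bs @ cs)" and x: "x \<in> V" "proj cs x = x"
    and orth: "\<And>k. k < length bs \<Longrightarrow> g x (bs!k) = 0"
  shows "proj (bs @ cs) x = x"
  using proj_append[of bs cs x] proj_orth[OF x(1) orth] x by simp

definition coord :: "vec list \<Rightarrow> vec \<Rightarrow> vec" where
  "coord bs x = (\<lambda>k. if k < length bs then g x (bs!k) else 0)"
definition uncoord :: "vec list \<Rightarrow> vec \<Rightarrow> vec" where
  "uncoord bs y = vsum {..<length bs} y (\<lambda>k. bs!k)"

lemma coord_lin: "orthonormal bs \<Longrightarrow> lin_on n (length bs) (coord bs)"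
  unfolding lin_on_def coord_def by (auto simp: orthonormal_in cong: if_cong) (auto simp: fvec_def vec_defs fun_eq_iff)
lemma uncoord_lin: "orthonormal bs \<Longrightarrow> lin_on (length bs) n (uncoord bs)"
  unfolding lin_on_def uncoord_def vsum_def
  by (auto simp: fvec_def vec_defs fun_eq_iff algebra_simps sum.distrib sum_distrib_left
        intro!: sum.neutral dest: orthonormal_in)
lemma uncoord_coord: "uncoord bs (coord bs x) = proj bs x"
  unfolding uncoord_def coord_def proj_def vsum_def by simp

lemma coord_uncoord: assumes "orthonormal bs" "y \<in> fvec (length bs)" shows "coord bs (uncoord bs y) = y"
proof
  fix k show "coord bs (uncoord bs y) k = y k"
  proof (cases "k < length bs")
    case True
    have "g (uncoord bs y) (bs!k) = (\<Sum>j<length bs. y j * g (bs!j) (bs!k))"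
      unfolding uncoord_def using assms True by (subst g_vsum) (auto intro: orthonormal_in)
    also have "\<dots> = (\<Sum>j<length bs. if j = k then y k else 0)"
      using assms True by (intro sum.cong) (auto simp: orthonormal_g)
    finally show ?thesis using True by (simp add: coord_def)
  next
    case False thus ?thesis using assms(2) by (simp add: coord_def fvec_def)
  qed
qed

lemma uncoord_ebas: assumes "k < length bs" shows "uncoord bs (ebas k) = bs!k"
proof
  fix i
  have "uncoord bs (ebas k) i = (\<Sum>j<length bs. if j = k then (bs!k) i else 0)"
    unfolding uncoord_def vsum_def by (rule sum.cong) (auto simp: ebas_def)
  thus "uncoord bs (ebas k) i = (bs!k) i" using assms by simp
qed

lemma coord_append: "coord (bs @ cs) x = join (length bs) (coord bs x) (coord cs x)"
  by (auto simp: coord_def join_def nth_append fun_eq_iff)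

lemma coord_bij: assumes "onb bs" shows "bij_betw (coord bs) V (fvec (length bs))"
proof (rule bij_betw_byWitness[of _ "uncoord bs"])
  have on: "orthonormal bs" using assms unfolding onb_def by blast
  show "\<forall>a\<in>V. uncoord bs (coord bs a) = a" using assms by (simp add: uncoord_coord onb_def)
  show "\<forall>a'\<in>fvec (length bs). coord bs (uncoord bs a') = a'" using coord_uncoord on by blast
  show "coord bs ` V \<subseteq> fvec (length bs)" using coord_lin[OF on] lin_in by blast
  show "uncoord bs ` fvec (length bs) \<subseteq> V" using uncoord_lin[OF on] lin_in by blast
qed

lemma tr_onb: assumes b: "onb bs" and M: "lin_on n n M"
  shows "tr n M = (\<Sum>k<length bs. g (M (bs!k)) (bs!k))"
proof -
  have on: "orthonormal bs" using b unfolding onb_def by blast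
  have "tr n M = tr n (uncoord bs \<circ> (coord bs \<circ> M))"
    by (rule tr_cong) (use b M lin_in in \<open>auto simp: uncoord_coord onb_def\<close>)
  also have "\<dots> = tr (length bs) ((coord bs \<circ> M) \<circ> uncoord bs)"
    by (rule tr_comp_commute[symmetric]) (simp_all add: lin_comp[OF M coord_lin[OF on]] uncoord_lin on)
  also have "\<dots> = (\<Sum>k<length bs. g (M (bs!k)) (bs!k))"
    unfolding tr_def by (rule sum.cong) (simp_all add: uncoord_ebas coord_def)
  finally show ?thesis .
qed

lemma onb_expand: assumes "onb bs" "x \<in> V"
  shows "x = vsum {..<length bs} (\<lambda>k. g x (bs!k)) (\<lambda>k. bs!k)"
  using assms unfolding onb_def proj_def by simp

lemma lin_zero_on_onb:
  assumes b: "onb bs" and M: "lin_on n m M" and z: "\<And>k. k < length bs \<Longrightarrow> M (bs!k) = vzero" and x: "x \<in> V"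
  shows "M x = vzero"
proof -
  have "M x = vsum {..<length bs} (\<lambda>k. g x (bs!k)) (\<lambda>k. M (bs!k))"
    using onb_expand[OF b x] lin_vsum[OF M, of "{..<length bs}" "\<lambda>k. bs!k"] b
    by (metis finite_lessThan lessThan_iff onb_def orthonormal_in)
  thus ?thesis using z by (simp add: vsum_def vzero_def)
qed


lemma sum_skew_sym_zero:
  fixes a h :: "nat \<Rightarrow> nat \<Rightarrow> real"
  assumes "\<And>i k. i < m \<Longrightarrow> k < m \<Longrightarrow> a i k = - a k i" "\<And>i k. i < m \<Longrightarrow> k < m \<Longrightarrow> h i k = h k i"
  shows "(\<Sum>i<m. \<Sum>k<m. a i k * h k i) = 0"
proof -
  have "(\<Sum>i<m. \<Sum>k<m. a i k * h k i) = (\<Sum>k<m. \<Sum>i<m. a i k * h k i)" by (rule sum.swap)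
  also have "\<dots> = (\<Sum>k<m. \<Sum>i<m. - (a k i * h i k))"
  proof (intro sum.cong refl)
    fix k i assume "k \<in> {..<m}" "i \<in> {..<m}"
    thus "a i k * h k i = - (a k i * h i k)" using assms(1)[of i k] assms(2)[of k i] by simp
  qed
  also have "\<dots> = - (\<Sum>k<m. \<Sum>i<m. a k i * h i k)" by (simp add: sum_negf)
  finally show ?thesis by simp
qed

lemma double_sum_nonneg_eq_0:
  fixes f :: "nat \<Rightarrow> nat \<Rightarrow> real"
  assumes sum: "(\<Sum>i<m. \<Sum>j<m. f i j) = 0" and nonneg: "\<And>i j. i < m \<Longrightarrow> j < m \<Longrightarrow> f i j \<ge> 0"
    and ij: "i < m" "j < m"
  shows "f i j = 0"
proof -
  have "\<forall>i\<in>{..<m}. (\<Sum>j<m. f i j) = 0" using sum nonneg by (subst (asm) sum_nonneg_eq_0_iff) (auto intro: sum_nonneg)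
  thus ?thesis using ij nonneg[OF ij(1)] sum_nonneg_eq_0_iff[of "{..<m}" "f i"] by auto
qed

lemma bilin_zero_on_onb:
  assumes b: "onb bs" and \<beta>1: "\<And>y. y \<in> V \<Longrightarrow> lin_on n n (\<lambda>x. \<beta> x y)" and \<beta>2: "\<And>x. x \<in> V \<Longrightarrow> lin_on n n (\<beta> x)"
    and zero: "\<And>i j. i < length bs \<Longrightarrow> j < length bs \<Longrightarrow> \<beta> (bs!i) (bs!j) = vzero"
    and x: "x \<in> V" and y: "y \<in> V"
  shows "\<beta> x y = vzero"
proof -
  have bV: "\<And>k. k < length bs \<Longrightarrow> bs!k \<in> V" using b orthonormal_in unfolding onb_def by blast
  have "\<beta> (bs!i) y = vzero" if "i < length bs" for i
    using lin_zero_on_onb[OF b \<beta>2[OF bV[OF that]] _ y] zero that by blast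
  thus ?thesis using lin_zero_on_onb[OF b \<beta>1[OF y] _ x] by blast
qed

lemma sum_skew_action_zero:
  fixes a :: "nat \<Rightarrow> nat \<Rightarrow> real"
  assumes a: "\<And>i k. i < m \<Longrightarrow> k < m \<Longrightarrow> a i k = - a k i" and hV: "\<And>i j. i < m \<Longrightarrow> j < m \<Longrightarrow> h i j \<in> V"
  shows "(\<Sum>i<m. \<Sum>j<m. (\<Sum>k<m. a i k * g (h k j) (h i j)) + (\<Sum>k<m. a j k * g (h i k) (h i j))) = 0"
proof -
  have "(\<Sum>i<m. \<Sum>k<m. a i k * g (h k j) (h i j)) = 0" if "j < m" for j
    by (rule sum_skew_sym_zero[OF a]) (use hV that in \<open>auto intro: g_sym\<close>)
  moreover have "(\<Sum>j<m. \<Sum>k<m. a j k * g (h i k) (h i j)) = 0" if "i < m" for i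
    by (rule sum_skew_sym_zero[OF a]) (use hV that in \<open>auto intro: g_sym\<close>)
  ultimately show ?thesis
    unfolding sum.distrib by (subst sum.swap[of "\<lambda>i j. \<Sum>k<m. a i k * g (h k j) (h i j)"]) simp
qed

text \<open>A bilinear map \<open>\<beta>\<close> with \<open>A \<circ> \<beta> - \<beta>(A\<cdot>,\<cdot>) - \<beta>(\<cdot>,A\<cdot>) = -\<lambda>\<beta>\<close> for skew \<open>A\<close>
  and real \<open>\<lambda> \<noteq> 0\<close> vanishes: the operator on the left is skew for the induced inner product
  on bilinear maps, so it has no nonzero real eigenvalue.\<close>
lemma bilin_skew_eigen_zero:
  assumes b: "onb bs" and A: "lin_on n n A" and A_skew: "\<And>x y. x \<in> V \<Longrightarrow> y \<in> V \<Longrightarrow> g (A x) y = - g x (A y)"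
    and \<beta>1: "\<And>y. y \<in> V \<Longrightarrow> lin_on n n (\<lambda>x. \<beta> x y)" and \<beta>2: "\<And>x. x \<in> V \<Longrightarrow> lin_on n n (\<beta> x)"
    and lam: "lam \<noteq> 0"
    and eigen: "\<And>x y. x \<in> V \<Longrightarrow> y \<in> V \<Longrightarrow>
       vadd (A (\<beta> x y)) (vsmul lam (\<beta> x y)) = vadd (\<beta> (A x) y) (\<beta> x (A y))"
    and x: "x \<in> V" and y: "y \<in> V"
  shows "\<beta> x y = vzero"
proof -
  define m where "m = length bs"
  define e where "e k = bs!k" for k
  define a where "a i k = g (A (e i)) (e k)" for i k
  define h where "h i j = \<beta> (e i) (e j)" for i j
  have eV: "\<And>k. k < m \<Longrightarrow> e k \<in> V" using b orthonormal_in unfolding e_def m_def onb_def by blast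
  have AV: "\<And>x. x \<in> V \<Longrightarrow> A x \<in> V" using lin_in[OF A] .
  have hV: "h i j \<in> V" if "i < m" "j < m" for i j
    unfolding h_def using lin_in[OF \<beta>2[OF eV[OF that(1)]] eV[OF that(2)]] .
  have expand: "\<And>x. x \<in> V \<Longrightarrow> x = vsum {..<m} (\<lambda>k. g x (e k)) e"
    using onb_expand[OF b] unfolding m_def e_def by blast
  have a_skew: "a i k = - a k i" if "i < m" "k < m" for i k
    unfolding a_def using A_skew[OF eV[OF that(1)] eV[OF that(2)]] g_sym[OF eV[OF that(1)] AV[OF eV[OF that(2)]]]
    by simp
  have \<beta>_A1: "\<beta> (A (e i)) (e j) = vsum {..<m} (a i) (\<lambda>k. h k j)" if "i < m" "j < m" for i j
    using lin_vsum[OF \<beta>1[OF eV[OF that(2)]], of "{..<m}" e "a i"] expand[OF AV[OF eV[OF that(1)]]] eV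
    unfolding a_def h_def by simp
  have \<beta>_A2: "\<beta> (e i) (A (e j)) = vsum {..<m} (a j) (\<lambda>k. h i k)" if "i < m" "j < m" for i j
    using lin_vsum[OF \<beta>2[OF eV[OF that(1)]], of "{..<m}" e "a j"] expand[OF AV[OF eV[OF that(2)]]] eV
    unfolding a_def h_def by simp
  have sq_norm: "lam * g (h i j) (h i j) =
      (\<Sum>k<m. a i k * g (h k j) (h i j)) + (\<Sum>k<m. a j k * g (h i k) (h i j))" if ij: "i < m" "j < m" for i j
  proof -
    have hij: "h i j \<in> V" using hV ij by blast
    have "g (A (h i j)) (h i j) = 0" using A_skew[OF hij hij] g_sym[OF hij AV[OF hij]] by simp
    hence "lam * g (h i j) (h i j) = g (vadd (A (h i j)) (vsmul lam (h i j))) (h i j)"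
      using hij AV by simp
    also have "\<dots> = g (\<beta> (A (e i)) (e j)) (h i j) + g (\<beta> (e i) (A (e j))) (h i j)"
      using eigen[OF eV eV] ij hij lin_in[OF \<beta>1[OF eV[OF ij(2)]] AV[OF eV[OF ij(1)]]]
        lin_in[OF \<beta>2[OF eV[OF ij(1)]] AV[OF eV[OF ij(2)]]] unfolding h_def by simp
    also have "g (\<beta> (A (e i)) (e j)) (h i j) = (\<Sum>k<m. a i k * g (h k j) (h i j))"
      unfolding \<beta>_A1[OF ij] by (rule g_vsum) (use hV ij in auto)
    also have "g (\<beta> (e i) (A (e j))) (h i j) = (\<Sum>k<m. a j k * g (h i k) (h i j))"
      unfolding \<beta>_A2[OF ij] by (rule g_vsum) (use hV ij in auto)
    finally show ?thesis .
  qed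
  have "lam * (\<Sum>i<m. \<Sum>j<m. g (h i j) (h i j)) =
      (\<Sum>i<m. \<Sum>j<m. (\<Sum>k<m. a i k * g (h k j) (h i j)) + (\<Sum>k<m. a j k * g (h i k) (h i j)))"
    unfolding sum_distrib_left by (intro sum.cong refl) (simp add: sq_norm)
  also have "\<dots> = 0" by (rule sum_skew_action_zero[OF a_skew hV])
  finally have "(\<Sum>i<m. \<Sum>j<m. g (h i j) (h i j)) = 0" using lam by simp
  hence "g (h i j) (h i j) = 0" if "i < m" "j < m" for i j
    using double_sum_nonneg_eq_0[of "\<lambda>i j. g (h i j) (h i j)" m i j] g_nonneg[OF hV] that by simp
  hence h0: "h i j = vzero" if "i < m" "j < m" for i j using g_self_eq_0[OF hV[OF that]] that by simp
  have zero: "\<beta> (bs!i) (bs!j) = vzero" if "i < length bs" "j < length bs" for i j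
    using h0[of i j] that unfolding h_def e_def m_def by simp
  show ?thesis using b \<beta>1 \<beta>2 zero x y by (rule bilin_zero_on_onb)
qed

end


locale inner_product_J = inner_product +
  fixes J :: "vec \<Rightarrow> vec"
  assumes J_lin: "lin_on n n J" and J_J: "x \<in> fvec n \<Longrightarrow> J (J x) = vsmul (-1) x"
    and g_J_J: "x \<in> fvec n \<Longrightarrow> y \<in> fvec n \<Longrightarrow> g (J x) (J y) = g x y"
begin

lemmas J_simps[simp] = lin_simps[OF J_lin]

lemma g_J_skew: "x \<in> V \<Longrightarrow> y \<in> V \<Longrightarrow> g x (J y) = - g (J x) y"
  using g_J_J[of "J x" y] by (simp add: J_J)

lemma g_J_self: "x \<in> V \<Longrightarrow> g x (J x) = 0"
  using g_J_skew[of x x] g_sym[of x "J x"] by simp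

definition J_invariant_subspace :: "vec set \<Rightarrow> bool" where
  "J_invariant_subspace W \<longleftrightarrow> W \<subseteq> V \<and> vzero \<in> W \<and> (\<forall>x\<in>W. \<forall>y\<in>W. vadd x y \<in> W) \<and>
     (\<forall>a. \<forall>x\<in>W. vsmul a x \<in> W) \<and> (\<forall>x\<in>W. J x \<in> W)"

definition J_closed :: "vec list \<Rightarrow> bool" where
  "J_closed bs \<longleftrightarrow> (\<forall>k<length bs. proj bs (J (bs!k)) = J (bs!k))"

lemma J_closed_extend:
  assumes on: "orthonormal bs" and cl: "J_closed bs" and u: "u \<in> V" "g u u = 1"
    and orth: "\<And>k. k < length bs \<Longrightarrow> g (bs!k) u = 0"
  shows "orthonormal (bs @ [u, J u])" "J_closed (bs @ [u, J u])"
proof -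
  have bV: "\<And>k. k < length bs \<Longrightarrow> bs!k \<in> V" using on orthonormal_in by blast
  have orth_J: "g (bs!k) (J u) = 0" if k: "k < length bs" for k
  proof -
    have "g (J (bs!k)) u = 0"
      using g_orth_proj_fixed[OF on _ _ u(1) orth] cl k bV unfolding J_closed_def by simp
    thus ?thesis using g_J_skew[OF bV[OF k] u(1)] by simp
  qed
  have "orthonormal [u, J u]"
    using u g_J_J[OF u(1) u(1)] g_J_self[OF u(1)] g_sym[OF u(1) lin_in[OF J_lin u(1)]]
    unfolding orthonormal_def by (auto simp: less_Suc_eq nth_Cons')
  thus on': "orthonormal (bs @ [u, J u])"
    using on orth orth_J by (simp add: orthonormal_append_iff less_Suc_eq nth_Cons')
  show "J_closed (bs @ [u, J u])" unfolding J_closed_def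
  proof (intro allI impI)
    fix k assume k: "k < length (bs @ [u, J u])"
    have fix_u: "proj (bs @ [u, J u]) u = u" and fix_Ju: "proj (bs @ [u, J u]) (J u) = J u"
      using proj_member[OF on', of "length bs"] proj_member[OF on', of "Suc (length bs)"] by (simp_all add: nth_append)
    consider "k < length bs" | "k = length bs" | "k = Suc (length bs)" using k by force
    thus "proj (bs @ [u, J u]) (J ((bs @ [u, J u]) ! k)) = J ((bs @ [u, J u]) ! k)"
    proof cases
      case 1 thus ?thesis using proj_append_fixed1[OF on', of "J (bs!k)"] cl bV unfolding J_closed_def
        by (simp add: nth_append)
    next
      case 2 thus ?thesis using fix_Ju by (simp add: nth_append)
    next
      case 3 thus ?thesis using fix_u lin_smul[OF proj_lin[OF on'] u(1), of "-1"] J_J[OF u(1)]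
        by (simp add: nth_append)
    qed
  qed
qed

lemma J_orthonormal_extend_vector:
  assumes W: "J_invariant_subspace W"
    and bs: "orthonormal bs" "set bs \<subseteq> W" "even (length bs)" "J_closed bs" and v: "v \<in> W"
  obtains bs' where "orthonormal bs'" "set bs' \<subseteq> W" "even (length bs')" "J_closed bs'" "proj bs' v = v"
    "\<And>x. x \<in> V \<Longrightarrow> proj bs x = x \<Longrightarrow> proj bs' x = x"
proof (cases "proj bs v = v")
  case True thus ?thesis using that bs by blast
next
  case False
  have WV: "W \<subseteq> V" using W unfolding J_invariant_subspace_def by blast
  have vV: "v \<in> V" using v WV by blast
  have bV: "\<And>k. k < length bs \<Longrightarrow> bs!k \<in> V" using bs orthonormal_in by blast
  define w where "w = vsub v (proj bs v)"
  have pW: "proj bs v \<in> W" unfolding proj_def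
    by (rule vsum_closed) (use W bs(2) in \<open>auto simp: J_invariant_subspace_def\<close>)
  have wW: "w \<in> W" using W pW v unfolding w_def vsub_eq J_invariant_subspace_def by blast
  have wV: "w \<in> V" using wW WV by blast
  have w0: "w \<noteq> vzero"
  proof
    assume "w = vzero"
    hence "proj bs v = v" unfolding w_def by (simp add: vec_defs fun_eq_iff)
    thus False using False by simp
  qed
  have orth_w: "g (bs!k) w = 0" if "k < length bs" for k
    using that bV vV g_proj[OF bs(1) that vV] g_sym unfolding w_def by (simp add: proj_in[OF bs(1)])
  define r where "r = sqrt (g w w)"
  have r: "r > 0" "r * r = g w w" using g_pos[OF wV w0] unfolding r_def by (simp_all add: real_sqrt_mult[symmetric])
  define u where "u = vsmul (1/r) w"
  have uW: "u \<in> W" "J u \<in> W" using wW W unfolding u_def J_invariant_subspace_def by blast+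
  have u: "u \<in> V" "g u u = 1" using uW WV wV r unfolding u_def by (auto simp: field_simps)
  have orth_u: "g (bs!k) u = 0" if "k < length bs" for k
    using orth_w[OF that] bV[OF that] wV unfolding u_def by simp
  define bs' where "bs' = bs @ [u, J u]"
  have on': "orthonormal bs'" and cl': "J_closed bs'"
    using J_closed_extend[OF bs(1) bs(4) u orth_u] unfolding bs'_def by blast+
  have keep: "proj bs' x = x" if "x \<in> V" "proj bs x = x" for x
    using proj_append_fixed1 on' that unfolding bs'_def by blast
  have "v = vadd (proj bs v) (vsmul r u)" using r unfolding u_def w_def by (auto simp: vec_defs)
  moreover have "proj bs' u = u" using proj_member[OF on', of "length bs"] unfolding bs'_def by (simp add: nth_append)
  ultimately have "proj bs' v = v"
    using keep[OF proj_in[OF bs(1)] proj_idem[OF bs(1) vV]] lin_add[OF proj_lin[OF on']] lin_smul[OF proj_lin[OF on']] u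
    by (metis fvec_smul proj_in[OF bs(1)])
  moreover have "set bs' \<subseteq> W" "even (length bs')" using bs uW unfolding bs'_def by auto
  ultimately show ?thesis using that on' cl' keep by blast
qed

lemma J_orthonormal_spanning:
  assumes W: "J_invariant_subspace W" and vs: "set vs \<subseteq> W"
  obtains bs where "orthonormal bs" "set bs \<subseteq> W" "even (length bs)" "J_closed bs" "\<forall>v\<in>set vs. proj bs v = v"
  using vs
proof (induction vs arbitrary: thesis)
  case Nil
  show ?case by (rule Nil.prems(1)[of "[]"]) (simp_all add: orthonormal_def J_closed_def)
next
  case (Cons v vs)
  obtain bs where bs: "orthonormal bs" "set bs \<subseteq> W" "even (length bs)" "J_closed bs" "\<forall>v\<in>set vs. proj bs v = v"
    using Cons.IH Cons.prems(2) by auto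
  obtain bs' where bs': "orthonormal bs'" "set bs' \<subseteq> W" "even (length bs')" "J_closed bs'" "proj bs' v = v"
    and keep: "\<And>x. x \<in> V \<Longrightarrow> proj bs x = x \<Longrightarrow> proj bs' x = x"
    using J_orthonormal_extend_vector[OF W bs(1-4)] Cons.prems(2) by auto
  have "\<forall>x\<in>set vs. proj bs' x = x"
    using keep bs(5) Cons.prems(2) W unfolding J_invariant_subspace_def by auto
  thus ?case using Cons.prems(1) bs' by simp
qed

text \<open>Gram--Schmidt applied to the images of the standard basis.\<close>
lemma J_orthonormal_basis_of_range:
  assumes W: "J_invariant_subspace W" and R: "lin_on n n R" "\<And>x. x \<in> V \<Longrightarrow> R x \<in> W"
    and R_fix: "\<And>w. w \<in> W \<Longrightarrow> R w = w"
  obtains bs where "orthonormal bs" "set bs \<subseteq> W" "even (length bs)" "J_closed bs" "\<forall>w\<in>W. proj bs w = w"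
proof -
  have "set (map (R \<circ> ebas) [0..<n]) \<subseteq> W" using R(2) by auto
  then obtain bs where bs: "orthonormal bs" "set bs \<subseteq> W" "even (length bs)" "J_closed bs"
    and fix_ebas: "\<forall>v\<in>set (map (R \<circ> ebas) [0..<n]). proj bs v = v"
    by (rule J_orthonormal_spanning[OF W])
  have "proj bs w = w" if w: "w \<in> W" for w
  proof -
    have wV: "w \<in> V" using w W unfolding J_invariant_subspace_def by blast
    have "w = vsum {..<n} w (\<lambda>k. R (ebas k))"
      using R_fix[OF w] fvec_expand[OF wV] lin_vsum[OF R(1), of "{..<n}" ebas w] by simp
    moreover have "proj bs (vsum {..<n} w (\<lambda>k. R (ebas k))) = vsum {..<n} w (\<lambda>k. R (ebas k))"
      by (rule lin_fixes_vsum[OF proj_lin[OF bs(1)]]) (use fix_ebas R(1) lin_in in auto)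
    ultimately show ?thesis by simp
  qed
  thus ?thesis using that bs by blast
qed

end


section \<open>Hermitian Lie algebras\<close>

lemma lie_algebra_lin_left:
  assumes "lie_algebra n br" "y \<in> fvec n"
  shows "lin_on n n (\<lambda>x. br x y)"
proof -
  have anti: "\<And>x y. x \<in> fvec n \<Longrightarrow> y \<in> fvec n \<Longrightarrow> br x y = vsmul (-1) (br y x)"
    and lin: "\<And>x. x \<in> fvec n \<Longrightarrow> lin_on n n (br x)" using assms(1) unfolding lie_algebra_def by blast+
  note lin_y = lin_simps[OF lin[OF assms(2)]]
  show ?thesis unfolding lin_on_def
  proof (intro conjI ballI allI)
    fix x assume x: "x \<in> fvec n"
    show "br x y \<in> fvec n" using anti[OF x assms(2)] lin_y x by simp
    show "br (vsmul a x) y = vsmul a (br x y)" for a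
      using anti[OF x assms(2)] anti[OF fvec_smul[OF x] assms(2)] lin_y x by (simp add: vec_defs)
    fix x' assume x': "x' \<in> fvec n"
    show "br (vadd x x') y = vadd (br x y) (br x' y)"
      using anti[OF x assms(2)] anti[OF x' assms(2)] anti[OF fvec_add[OF x x'] assms(2)] lin_y x x'
      by (simp add: vec_defs algebra_simps)
  qed
qed

lemma lin_on_pullback:
  assumes \<iota>: "lin_on k n \<iota>" "inj_on \<iota> (fvec k)" and f: "lin_on n n f"
    and f': "\<And>X. X \<in> fvec k \<Longrightarrow> f' X \<in> fvec k \<and> \<iota> (f' X) = f (\<iota> X)"
  shows "lin_on k k f'"
proof -
  have eq: "\<And>a b. a \<in> fvec k \<Longrightarrow> b \<in> fvec k \<Longrightarrow> \<iota> a = \<iota> b \<Longrightarrow> a = b" using \<iota>(2) unfolding inj_on_def by blast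
  show ?thesis unfolding lin_on_def
  proof (intro conjI ballI allI)
    fix X Y assume XY: "X \<in> fvec k" "Y \<in> fvec k"
    show "f' (vadd X Y) = vadd (f' X) (f' Y)"
      by (rule eq) (use XY in \<open>simp_all add: f' lin_simps[OF \<iota>(1)] lin_simps[OF f]\<close>)
  next
    fix a X assume X: "X \<in> fvec k"
    show "f' (vsmul a X) = vsmul a (f' X)"
      by (rule eq) (use X in \<open>simp_all add: f' lin_simps[OF \<iota>(1)] lin_simps[OF f]\<close>)
  qed (use f' in simp)
qed

lemma lie_algebra_pullback:
  assumes lie: "lie_algebra n br" and \<iota>: "lin_on k n \<iota>" "inj_on \<iota> (fvec k)"
    and br': "\<And>X Y. X \<in> fvec k \<Longrightarrow> Y \<in> fvec k \<Longrightarrow> br' X Y \<in> fvec k \<and> \<iota> (br' X Y) = br (\<iota> X) (\<iota> Y)"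
  shows "lie_algebra k br'"
proof -
  have eq: "\<And>a b. a \<in> fvec k \<Longrightarrow> b \<in> fvec k \<Longrightarrow> \<iota> a = \<iota> b \<Longrightarrow> a = b" using \<iota>(2) unfolding inj_on_def by blast
  note \<iota>_simps = lin_simps[OF \<iota>(1)]
  have brk: "\<And>X Y. X \<in> fvec k \<Longrightarrow> Y \<in> fvec k \<Longrightarrow> br' X Y \<in> fvec k"
    and br_\<iota>: "\<And>X Y. X \<in> fvec k \<Longrightarrow> Y \<in> fvec k \<Longrightarrow> \<iota> (br' X Y) = br (\<iota> X) (\<iota> Y)" using br' by blast+
  have lin: "\<And>x. x \<in> fvec n \<Longrightarrow> lin_on n n (br x)"
    and anti: "\<And>x y. x \<in> fvec n \<Longrightarrow> y \<in> fvec n \<Longrightarrow> br x y = vsmul (-1) (br y x)"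
    and jac: "\<And>x y z. x \<in> fvec n \<Longrightarrow> y \<in> fvec n \<Longrightarrow> z \<in> fvec n \<Longrightarrow>
        vadd (br x (br y z)) (vadd (br y (br z x)) (br z (br x y))) = vzero"
    using lie unfolding lie_algebra_def by blast+
  show ?thesis unfolding lie_algebra_def
  proof (intro conjI ballI)
    fix X assume X: "X \<in> fvec k"
    show "lin_on k k (br' X)" by (rule lin_on_pullback[OF \<iota> lin[OF lin_in[OF \<iota>(1) X]]]) (use X br' in simp)
  next
    fix X Y assume XY: "X \<in> fvec k" "Y \<in> fvec k"
    show "br' X Y = vsmul (-1) (br' Y X)"
      by (rule eq) (use XY anti[OF lin_in[OF \<iota>(1) XY(1)] lin_in[OF \<iota>(1) XY(2)]] in \<open>simp_all add: brk br_\<iota> \<iota>_simps\<close>)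
  next
    fix X Y Z assume XYZ: "X \<in> fvec k" "Y \<in> fvec k" "Z \<in> fvec k"
    show "vadd (br' X (br' Y Z)) (vadd (br' Y (br' Z X)) (br' Z (br' X Y))) = vzero"
      by (rule eq) (use XYZ jac[OF lin_in[OF \<iota>(1) XYZ(1)] lin_in[OF \<iota>(1) XYZ(2)] lin_in[OF \<iota>(1) XYZ(3)]]
          in \<open>simp_all add: brk br_\<iota> \<iota>_simps\<close>)
  qed
qed


locale hermitian =
  fixes n :: nat and br :: "vec \<Rightarrow> vec \<Rightarrow> vec" and J :: "vec \<Rightarrow> vec" and \<omega> :: "vec \<Rightarrow> vec \<Rightarrow> real"
  assumes herm: "hermitian_lie n br J \<omega>"
begin

lemma even_dim: "even n" using herm unfolding hermitian_lie_def by blast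
lemma lie: "lie_algebra n br" using herm unfolding hermitian_lie_def by blast
lemma br_lin: "x \<in> fvec n \<Longrightarrow> lin_on n n (br x)" using lie unfolding lie_algebra_def by blast
lemma br_lin_left: "y \<in> fvec n \<Longrightarrow> lin_on n n (\<lambda>x. br x y)" using lie_algebra_lin_left[OF lie] .
lemma br_anti: "x \<in> fvec n \<Longrightarrow> y \<in> fvec n \<Longrightarrow> br x y = vsmul (-1) (br y x)"
  using lie unfolding lie_algebra_def by blast
lemma br_jacobi: "x \<in> fvec n \<Longrightarrow> y \<in> fvec n \<Longrightarrow> z \<in> fvec n \<Longrightarrow>
   vadd (br x (br y z)) (vadd (br y (br z x)) (br z (br x y))) = vzero"
  using lie unfolding lie_algebra_def by blast
lemmas br_simps[simp] = lin_simps[OF br_lin] lin_simps[OF br_lin_left, simplified]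

lemma J_integrable: "x \<in> fvec n \<Longrightarrow> y \<in> fvec n \<Longrightarrow>
    br (J x) (J y) = vadd (br x y) (vadd (J (br (J x) y)) (J (br x (J y))))"
  using herm unfolding hermitian_lie_def by blast
lemma \<omega>_bilin: "bilin_on n \<omega>" using herm unfolding hermitian_lie_def by blast
lemmas \<omega>_simps[simp] = bilin_simps[OF \<omega>_bilin]
lemma \<omega>_anti: "x \<in> fvec n \<Longrightarrow> y \<in> fvec n \<Longrightarrow> \<omega> x y = - \<omega> y x"
  using herm unfolding hermitian_lie_def by blast
lemma \<omega>_nondegenerate: "x \<in> fvec n \<Longrightarrow> (\<And>y. y \<in> fvec n \<Longrightarrow> \<omega> x y = 0) \<Longrightarrow> x = vzero"
  using herm unfolding hermitian_lie_def by blast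
lemma \<omega>_J: "x \<in> fvec n \<Longrightarrow> y \<in> fvec n \<Longrightarrow> \<omega> (J x) (J y) = \<omega> x y"
  using herm unfolding hermitian_lie_def by blast

sublocale inner_product_J n "metric \<omega> J" J
proof -
  have J: "lin_on n n J" using herm unfolding hermitian_lie_def by blast
  have JJ: "\<forall>x\<in>fvec n. J (J x) = vsmul (-1) x" using herm unfolding hermitian_lie_def by blast
  have sym: "\<forall>x\<in>fvec n. \<forall>y\<in>fvec n. metric \<omega> J x y = metric \<omega> J y x"
    using herm unfolding hermitian_lie_def by blast
  have pos: "\<forall>x\<in>fvec n. x \<noteq> vzero \<longrightarrow> metric \<omega> J x x > 0" using herm unfolding hermitian_lie_def by blast
  show "inner_product_J n (metric \<omega> J) J"
  proof unfold_locales
    show "bilin_on n (metric \<omega> J)" unfolding bilin_on_def metric_def using lin_simps[OF J] by simp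
    show "metric \<omega> J (J x) (J y) = metric \<omega> J x y" if "x \<in> fvec n" "y \<in> fvec n" for x y
      using \<omega>_J[OF that(1) lin_in[OF J that(2)]] unfolding metric_def .
  qed (use J JJ sym pos in auto)
qed

abbreviation "g \<equiv> metric \<omega> J"

lemma \<omega>_eq_g: "x \<in> V \<Longrightarrow> y \<in> V \<Longrightarrow> \<omega> x y = - g x (J y)"
  unfolding metric_def by (simp add: J_J)

lemma onb_exists: obtains bs where "onb bs"
proof -
  have "J_invariant_subspace V" unfolding J_invariant_subspace_def by simp
  then obtain bs where "orthonormal bs" "\<forall>w\<in>V. proj bs w = w"
    by (rule J_orthonormal_basis_of_range[of V id]) (auto simp: lin_on_def)
  thus ?thesis using that unfolding onb_def by blast
qed

text \<open>In an orthonormal basis \<open>P x = \<Sum>\<^sub>k b(x, J e\<^sub>k) e\<^sub>k\<close>.\<close>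
lemma \<omega>_representation:
  assumes b: "bilin_on n b"
  obtains P where "lin_on n n P" "\<And>x y. x \<in> V \<Longrightarrow> y \<in> V \<Longrightarrow> \<omega> (P x) y = b x y"
proof -
  note b_simps = bilin_simps[OF b]
  obtain bs where onb: "onb bs" by (rule onb_exists)
  have bV: "\<And>k. k < length bs \<Longrightarrow> bs!k \<in> V" using onb orthonormal_in unfolding onb_def by blast
  have JbV: "\<And>k. k < length bs \<Longrightarrow> J (bs!k) \<in> V" using bV by simp
  define P where "P x = vsum {..<length bs} (\<lambda>k. b x (J (bs!k))) (\<lambda>k. bs!k)" for x
  have PV: "\<And>x. P x \<in> V" unfolding P_def by (intro fvec_vsum) (simp add: bV)
  have lin: "lin_on n n P" unfolding lin_on_def
  proof (intro conjI ballI allI)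
    fix x y assume xy: "x \<in> V" "y \<in> V"
    have "P (vadd x y) = vsum {..<length bs} (\<lambda>k. b x (J (bs!k)) + b y (J (bs!k))) (\<lambda>k. bs!k)"
      unfolding P_def vsum_def using xy bV by (intro ext sum.cong) (auto simp: b_simps)
    thus "P (vadd x y) = vadd (P x) (P y)" unfolding P_def vsum_def vadd_def
      by (simp add: algebra_simps sum.distrib)
  next
    fix a x assume x: "x \<in> V"
    have "P (vsmul a x) = vsum {..<length bs} (\<lambda>k. a * b x (J (bs!k))) (\<lambda>k. bs!k)"
      unfolding P_def vsum_def using x bV by (intro ext sum.cong) (auto simp: b_simps)
    thus "P (vsmul a x) = vsmul a (P x)" unfolding P_def vsum_def vsmul_def
      by (simp add: algebra_simps sum_distrib_left)
  qed (use PV in simp)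
  have "\<omega> (P x) y = b x y" if x: "x \<in> V" and y: "y \<in> V" for x y
  proof -
    have "g (P x) (J y) = (\<Sum>k<length bs. b x (J (bs!k)) * g (bs!k) (J y))"
      unfolding P_def by (rule g_vsum) (simp_all add: bV y)
    hence \<omega>P: "\<omega> (P x) y = - (\<Sum>k<length bs. b x (J (bs!k)) * g (bs!k) (J y))"
      using \<omega>_eq_g[OF PV y] by simp
    have Jy: "J y = vsum {..<length bs} (\<lambda>k. g (J y) (bs!k)) (\<lambda>k. bs!k)"
      using onb_expand[OF onb lin_in[OF J_lin y]] .
    have JJy: "J (J y) = vsum {..<length bs} (\<lambda>k. g (J y) (bs!k)) (\<lambda>k. J (bs!k))"
      by (subst Jy, rule lin_vsum[OF J_lin]) (simp_all add: bV)
    have "b x (J (J y)) = (\<Sum>k<length bs. g (J y) (bs!k) * b x (J (bs!k)))"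
      unfolding JJy by (rule linear_functional_vsum[of n]) (use x bV b_simps JbV in auto)
    moreover have "b x (J (J y)) = - b x y" using J_J[OF y] b_simps x y by simp
    moreover have "(\<Sum>k<length bs. g (J y) (bs!k) * b x (J (bs!k))) =
        (\<Sum>k<length bs. b x (J (bs!k)) * g (bs!k) (J y))"
      by (rule sum.cong) (simp_all add: g_sym[OF lin_in[OF J_lin y] bV])
    ultimately show ?thesis using \<omega>P by linarith
  qed
  thus ?thesis using that lin by blast
qed

definition cr_functional :: "vec \<Rightarrow> real" where
  "cr_functional U = - (1/2) * tr n (J \<circ> br U) + (1/2) * tr n (br (J U))"

lemma cr_form_functional: "cr_form n br J x y = cr_functional (br x y)"
  unfolding cr_form_def cr_functional_def ..

lemma cr_functional_add: "u \<in> V \<Longrightarrow> v \<in> V \<Longrightarrow> cr_functional (vadd u v) = cr_functional u + cr_functional v"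
  and cr_functional_smul: "u \<in> V \<Longrightarrow> cr_functional (vsmul a u) = a * cr_functional u"
proof -
  assume u: "u \<in> V"
  show "cr_functional (vsmul a u) = a * cr_functional u"
    using tr_cong[of n "J \<circ> br (vsmul a u)" "\<lambda>z. vsmul a ((J \<circ> br u) z)"]
      tr_cong[of n "br (J (vsmul a u))" "\<lambda>z. vsmul a (br (J u) z)"] tr_smul u
    unfolding cr_functional_def by (simp add: comp_def algebra_simps)
  assume v: "v \<in> V"
  show "cr_functional (vadd u v) = cr_functional u + cr_functional v"
    using tr_cong[of n "J \<circ> br (vadd u v)" "\<lambda>z. vadd ((J \<circ> br u) z) ((J \<circ> br v) z)"]
      tr_cong[of n "br (J (vadd u v))" "\<lambda>z. vadd (br (J u) z) (br (J v) z)"] tr_add u v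
    unfolding cr_functional_def by (simp add: comp_def algebra_simps)
qed

lemma cr_form_bilin: "bilin_on n (cr_form n br J)"
  unfolding bilin_on_def cr_form_functional by (simp add: cr_functional_add cr_functional_smul algebra_simps)

lemma cr_operator_exists: obtains P where "cr_operator n br J \<omega> P"
  using \<omega>_representation[OF cr_form_bilin] unfolding cr_operator_def by metis


lemma cr_form_iso:
  assumes \<phi>: "lin_on n m \<phi>" and \<psi>: "lin_on m n \<psi>" and \<psi>\<phi>: "\<And>x. x \<in> V \<Longrightarrow> \<psi> (\<phi> x) = x"
    and \<phi>\<psi>: "\<And>z. z \<in> fvec m \<Longrightarrow> \<phi> (\<psi> z) = z"
    and hbr: "\<And>x y. x \<in> V \<Longrightarrow> y \<in> V \<Longrightarrow> \<phi> (br x y) = br' (\<phi> x) (\<phi> y)"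
    and hJ: "\<And>x. x \<in> V \<Longrightarrow> \<phi> (J x) = J' (\<phi> x)"
    and x: "x \<in> V" and y: "y \<in> V"
  shows "cr_form m br' J' (\<phi> x) (\<phi> y) = cr_form n br J x y"
proof -
  define U where "U = br x y"
  have U: "U \<in> V" unfolding U_def using x y by simp
  have \<psi>V: "\<And>z. z \<in> fvec m \<Longrightarrow> \<psi> z \<in> V" using lin_in[OF \<psi>] .
  have br': "br' (\<phi> u) z = \<phi> (br u (\<psi> z))" if "u \<in> V" "z \<in> fvec m" for u z
    using hbr[OF that(1) \<psi>V[OF that(2)]] \<phi>\<psi>[OF that(2)] by simp
  have conj1: "(J' \<circ> br' (\<phi> U)) z = \<phi> ((J \<circ> br U) (\<psi> z))" if z: "z \<in> fvec m" for z
  proof -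
    have "br U (\<psi> z) \<in> V" using U \<psi>V[OF z] by simp
    thus ?thesis using br'[OF U z] hJ by simp
  qed
  have conj2: "br' (J' (\<phi> U)) z = \<phi> (br (J U) (\<psi> z))" if z: "z \<in> fvec m" for z
    using br'[OF lin_in[OF J_lin U] z] hJ[OF U] by simp
  have "tr m (J' \<circ> br' (\<phi> U)) = tr n (J \<circ> br U)"
    by (rule tr_conjugate[OF \<phi> \<psi> \<psi>\<phi> lin_comp[OF br_lin[OF U] J_lin] conj1])
  moreover have "tr m (br' (J' (\<phi> U))) = tr n (br (J U))"
    by (rule tr_conjugate[OF \<phi> \<psi> \<psi>\<phi> br_lin[OF lin_in[OF J_lin U]] conj2])
  ultimately show ?thesis unfolding cr_form_def U_def using hbr x y by simp
qed

lemma hermitian_lie_pullback: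
  assumes \<iota>: "lin_on k n \<iota>" "inj_on \<iota> (fvec k)" and ev: "even k"
    and br': "\<And>X Y. X \<in> fvec k \<Longrightarrow> Y \<in> fvec k \<Longrightarrow> br' X Y \<in> fvec k \<and> \<iota> (br' X Y) = br (\<iota> X) (\<iota> Y)"
    and J': "\<And>X. X \<in> fvec k \<Longrightarrow> J' X \<in> fvec k \<and> \<iota> (J' X) = J (\<iota> X)"
  shows "hermitian_lie k br' J' (\<lambda>X Y. \<omega> (\<iota> X) (\<iota> Y))"
proof -
  have eq: "\<And>a b. a \<in> fvec k \<Longrightarrow> b \<in> fvec k \<Longrightarrow> \<iota> a = \<iota> b \<Longrightarrow> a = b" using \<iota>(2) unfolding inj_on_def by blast
  note \<iota>_simps = lin_simps[OF \<iota>(1)]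
  have brk: "\<And>X Y. X \<in> fvec k \<Longrightarrow> Y \<in> fvec k \<Longrightarrow> br' X Y \<in> fvec k"
    and br_\<iota>: "\<And>X Y. X \<in> fvec k \<Longrightarrow> Y \<in> fvec k \<Longrightarrow> \<iota> (br' X Y) = br (\<iota> X) (\<iota> Y)" using br' by blast+
  have Jk: "\<And>X. X \<in> fvec k \<Longrightarrow> J' X \<in> fvec k"
    and J_\<iota>: "\<And>X. X \<in> fvec k \<Longrightarrow> \<iota> (J' X) = J (\<iota> X)" using J' by blast+
  have \<iota>0: "\<And>X. X \<in> fvec k \<Longrightarrow> \<iota> X = vzero \<Longrightarrow> X = vzero" using eq[OF _ fvec_zero] \<iota>_simps by simp
  have lin_J': "lin_on k k J'" by (rule lin_on_pullback[OF \<iota> J_lin J'])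
  have lie': "lie_algebra k br'" using lie_algebra_pullback[OF lie \<iota>, where br' = br'] br' by blast
  show ?thesis unfolding hermitian_lie_def metric_def
  proof (intro conjI ballI allI impI ev lin_J' lie')
    fix X assume X: "X \<in> fvec k"
    show "J' (J' X) = vsmul (-1) X" by (rule eq) (use X J_J in \<open>simp_all add: Jk J_\<iota> \<iota>_simps\<close>)
    assume "\<forall>Y\<in>fvec k. \<omega> (\<iota> X) (\<iota> Y) = 0"
    hence "g (\<iota> X) (\<iota> X) = 0" using Jk[OF X] J_\<iota>[OF X] unfolding metric_def by metis
    thus "X = vzero" using g_self_eq_0 \<iota>0 X \<iota>_simps by blast
  next
    fix X Y assume XY: "X \<in> fvec k" "Y \<in> fvec k"
    show "br' (J' X) (J' Y) = vadd (br' X Y) (vadd (J' (br' (J' X) Y)) (J' (br' X (J' Y))))"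
      by (rule eq) (use XY J_integrable[of "\<iota> X" "\<iota> Y"] in \<open>simp_all add: Jk J_\<iota> brk br_\<iota> \<iota>_simps\<close>)
    show "\<omega> (\<iota> X) (\<iota> Y) = - \<omega> (\<iota> Y) (\<iota> X)" using \<omega>_anti XY \<iota>_simps by blast
    show "\<omega> (\<iota> (J' X)) (\<iota> (J' Y)) = \<omega> (\<iota> X) (\<iota> Y)" using \<omega>_J XY J_\<iota> \<iota>_simps by simp
    show "\<omega> (\<iota> X) (\<iota> (J' Y)) = \<omega> (\<iota> Y) (\<iota> (J' X))" using g_sym XY J_\<iota> \<iota>_simps unfolding metric_def by simp
  next
    show "bilin_on k (\<lambda>X Y. \<omega> (\<iota> X) (\<iota> Y))" unfolding bilin_on_def by (simp add: \<iota>_simps)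
  next
    fix X assume X: "X \<in> fvec k" "X \<noteq> vzero"
    hence "\<iota> X \<noteq> vzero" using \<iota>0 by blast
    thus "0 < \<omega> (\<iota> X) (\<iota> (J' X))" using g_pos X J_\<iota> \<iota>_simps unfolding metric_def by simp
  qed
qed


lemma in_sp_iff_transpose:
  assumes A: "lin_on n n A"
  shows "in_sp n \<omega> A \<longleftrightarrow> is_transpose n g A (J \<circ> A \<circ> J)"
proof
  assume sp: "in_sp n \<omega> A"
  show "is_transpose n g A (J \<circ> A \<circ> J)" unfolding is_transpose_def metric_def
  proof (intro conjI ballI)
    show "lin_on n n (J \<circ> A \<circ> J)" using A J_lin lin_comp by blast
    fix x y assume xy: "x \<in> V" "y \<in> V"
    have "\<omega> (A x) (J y) + \<omega> x (A (J y)) = 0" using sp xy unfolding in_sp_def by simp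
    thus "\<omega> (A x) (J y) = \<omega> x (J ((J \<circ> A \<circ> J) y))" using xy A lin_in by (simp add: J_J)
  qed
next
  assume tp: "is_transpose n g A (J \<circ> A \<circ> J)"
  show "in_sp n \<omega> A" unfolding in_sp_def
  proof (intro ballI)
    fix x y assume xy: "x \<in> V" "y \<in> V"
    define y' where "y' = vsmul (-1) (J y)"
    have y': "y' \<in> V" "J y' = y" using xy by (simp_all add: y'_def J_J) (simp add: vec_defs)
    have "\<omega> (A x) (J y') = \<omega> x (J ((J \<circ> A \<circ> J) y'))"
      using tp xy y' unfolding is_transpose_def metric_def by blast
    thus "\<omega> (A x) y + \<omega> x (A y) = 0" using xy y' A lin_in by (simp add: J_J)
  qed
qed

end


section \<open>Semidirect products with an abelian ideal\<close>

locale semidirect = H1: hermitian n1 br1 J1 \<omega>1 + H2: hermitian n2 zero_br J2 \<omega>2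
  for n1 br1 J1 \<omega>1 n2 J2 \<omega>2 +
  fixes \<theta> :: "vec \<Rightarrow> vec \<Rightarrow> vec"
  assumes rep: "representation n1 n2 br1 \<theta>"
begin

abbreviation "sbr \<equiv> sd_br n1 br1 \<theta>"
abbreviation "sJ \<equiv> sd_J n1 J1 J2"
abbreviation "s\<omega> \<equiv> sd_\<omega> n1 \<omega>1 \<omega>2"

lemma \<theta>_lin: "X \<in> fvec n1 \<Longrightarrow> lin_on n2 n2 (\<theta> X)" using rep unfolding representation_def by blast
lemmas \<theta>_simps[simp] = lin_simps[OF \<theta>_lin]
lemma \<theta>_add_left[simp]: "X \<in> fvec n1 \<Longrightarrow> Y \<in> fvec n1 \<Longrightarrow> z \<in> fvec n2 \<Longrightarrow> \<theta> (vadd X Y) z = vadd (\<theta> X z) (\<theta> Y z)"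
  using rep unfolding representation_def by blast
lemma \<theta>_smul_left[simp]: "X \<in> fvec n1 \<Longrightarrow> z \<in> fvec n2 \<Longrightarrow> \<theta> (vsmul a X) z = vsmul a (\<theta> X z)"
  using rep unfolding representation_def by blast
lemma \<theta>_zero_left[simp]: "z \<in> fvec n2 \<Longrightarrow> \<theta> vzero z = vzero"
  using \<theta>_smul_left[of vzero z 0] by (simp add: vec_defs fvec_def)
lemma \<theta>_br: "X \<in> fvec n1 \<Longrightarrow> Y \<in> fvec n1 \<Longrightarrow> z \<in> fvec n2 \<Longrightarrow> \<theta> (br1 X Y) z = vsub (\<theta> X (\<theta> Y z)) (\<theta> Y (\<theta> X z))"
  using rep unfolding representation_def by blast

lemma sbr_join[simp]: "X \<in> fvec n1 \<Longrightarrow> Y \<in> fvec n1 \<Longrightarrow>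
   sbr (join n1 X a) (join n1 Y b) = join n1 (br1 X Y) (vsub (\<theta> X b) (\<theta> Y a))"
  by (simp add: sd_br_def)
lemma sJ_join[simp]: "X \<in> fvec n1 \<Longrightarrow> sJ (join n1 X a) = join n1 (J1 X) (J2 a)"
  by (simp add: sd_J_def)
lemma s\<omega>_join[simp]: "X \<in> fvec n1 \<Longrightarrow> Y \<in> fvec n1 \<Longrightarrow> s\<omega> (join n1 X a) (join n1 Y b) = \<omega>1 X Y + \<omega>2 a b"
  by (simp add: sd_\<omega>_def)

lemma sd_lie: "lie_algebra (n1+n2) sbr"
  unfolding lie_algebra_def
proof (intro conjI ballI)
  fix u assume "u \<in> fvec (n1+n2)"
  then obtain X a where X: "X \<in> fvec n1" "a \<in> fvec n2" "u = join n1 X a" by (rule fvec_add_cases)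
  show "lin_on (n1+n2) (n1+n2) (sbr u)" unfolding lin_on_def ball_fvec_add using X
    by (auto simp: join_ops join_eq_iff) (simp_all add: vec_defs fun_eq_iff algebra_simps)
next
  fix u v assume "u \<in> fvec (n1+n2)" "v \<in> fvec (n1+n2)"
  then obtain X a Y b where X: "X \<in> fvec n1" "a \<in> fvec n2" "u = join n1 X a"
    and Y: "Y \<in> fvec n1" "b \<in> fvec n2" "v = join n1 Y b" by (metis fvec_add_cases)
  show "sbr u v = vsmul (-1) (sbr v u)"
    using X Y H1.br_anti[of X Y] by (simp add: join_ops join_eq_iff) (simp add: vec_defs)
next
  fix u v w assume "u \<in> fvec (n1+n2)" "v \<in> fvec (n1+n2)" "w \<in> fvec (n1+n2)"
  then obtain X a Y b Z c where X: "X \<in> fvec n1" "a \<in> fvec n2" "u = join n1 X a"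
    and Y: "Y \<in> fvec n1" "b \<in> fvec n2" "v = join n1 Y b"
    and Z: "Z \<in> fvec n1" "c \<in> fvec n2" "w = join n1 Z c" by (metis fvec_add_cases)
  show "vadd (sbr u (sbr v w)) (vadd (sbr v (sbr w u)) (sbr w (sbr u v))) = vzero"
    using X Y Z H1.br_jacobi[of X Y Z] \<theta>_br[of X Y c] \<theta>_br[of Y Z a] \<theta>_br[of Z X b]
    by (simp add: join_ops join_eq_iff del: join_zero add: join_zero[symmetric])
       (simp add: vec_defs fun_eq_iff join_def)
qed

text \<open>Hypothesis (1) is exactly the \<open>g\<^sub>2\<close>-component of the integrability of \<open>J\<close>.\<close>
lemma cond1_pointwise:
  assumes c1: "cond1 n1 n2 J1 J2 \<theta>" and X: "X \<in> fvec n1" "b \<in> fvec n2"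
  shows "\<theta> (J1 X) (J2 b) i = J2 (\<theta> (J1 X) b) i + J2 (\<theta> X (J2 b)) i + \<theta> X b i"
proof -
  have "vsub (\<theta> (J1 X) (J2 b)) (J2 (\<theta> (J1 X) b)) = vsub (J2 (\<theta> X (J2 b))) (vsmul (-1) (\<theta> X b))"
    using c1 X unfolding cond1_def by (simp add: H2.J_J)
  hence "vsub (\<theta> (J1 X) (J2 b)) (J2 (\<theta> (J1 X) b)) i = vsub (J2 (\<theta> X (J2 b))) (vsmul (-1) (\<theta> X b)) i" by simp
  thus ?thesis by (simp add: vec_defs)
qed

lemma sJ_lin: "lin_on (n1+n2) (n1+n2) sJ"
  unfolding lin_on_def ball_fvec_add by (auto simp: join_ops join_eq_iff)

lemma sJ_sJ: "u \<in> fvec (n1+n2) \<Longrightarrow> sJ (sJ u) = vsmul (-1) u"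
  by (erule fvec_add_cases) (simp add: join_ops H1.J_J H2.J_J)

lemma sJ_integrable:
  assumes c1: "cond1 n1 n2 J1 J2 \<theta>" and u: "u \<in> fvec (n1+n2)" and v: "v \<in> fvec (n1+n2)"
  shows "sbr (sJ u) (sJ v) = vadd (sbr u v) (vadd (sJ (sbr (sJ u) v)) (sJ (sbr u (sJ v))))"
proof -
  obtain X a where X: "X \<in> fvec n1" "a \<in> fvec n2" "u = join n1 X a" using u by (rule fvec_add_cases)
  obtain Y b where Y: "Y \<in> fvec n1" "b \<in> fvec n2" "v = join n1 Y b" using v by (rule fvec_add_cases)
  show ?thesis using X Y cond1_pointwise[OF c1 X(1) Y(2)] cond1_pointwise[OF c1 Y(1) X(2)]
    by (simp add: join_ops join_eq_iff H1.J_integrable) (simp add: vec_defs fun_eq_iff algebra_simps)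
qed

lemma s\<omega>_bilin: "bilin_on (n1+n2) s\<omega>"
  unfolding bilin_on_def ball_fvec_add by (auto simp: join_ops algebra_simps)

lemma s\<omega>_anti:
  assumes "u \<in> fvec (n1+n2)" "v \<in> fvec (n1+n2)" shows "s\<omega> u v = - s\<omega> v u"
proof -
  obtain X a where X: "X \<in> fvec n1" "a \<in> fvec n2" "u = join n1 X a" using assms(1) by (rule fvec_add_cases)
  obtain Y b where Y: "Y \<in> fvec n1" "b \<in> fvec n2" "v = join n1 Y b" using assms(2) by (rule fvec_add_cases)
  show ?thesis using X Y H1.\<omega>_anti[of X Y] H2.\<omega>_anti[of a b] by simp
qed

lemma s\<omega>_J: "u \<in> fvec (n1+n2) \<Longrightarrow> v \<in> fvec (n1+n2) \<Longrightarrow> s\<omega> (sJ u) (sJ v) = s\<omega> u v"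
  by (erule fvec_add_cases, erule fvec_add_cases) (simp add: H1.\<omega>_J H2.\<omega>_J)

lemma s\<omega>_sym:
  assumes "u \<in> fvec (n1+n2)" "v \<in> fvec (n1+n2)" shows "s\<omega> u (sJ v) = s\<omega> v (sJ u)"
proof -
  obtain X a where X: "X \<in> fvec n1" "a \<in> fvec n2" "u = join n1 X a" using assms(1) by (rule fvec_add_cases)
  obtain Y b where Y: "Y \<in> fvec n1" "b \<in> fvec n2" "v = join n1 Y b" using assms(2) by (rule fvec_add_cases)
  show ?thesis using X Y H1.g_sym[of X Y] H2.g_sym[of a b] by (simp add: metric_def)
qed

lemma s\<omega>_nondegenerate:
  assumes u: "u \<in> fvec (n1+n2)" and nd: "\<forall>v\<in>fvec (n1+n2). s\<omega> u v = 0"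
  shows "u = vzero"
proof -
  obtain X a where X: "X \<in> fvec n1" "a \<in> fvec n2" "u = join n1 X a" using u by (rule fvec_add_cases)
  have "\<omega>1 X Y = 0" if "Y \<in> fvec n1" for Y using nd[rule_format, of "join n1 Y vzero"] X that by simp
  hence "X = vzero" using H1.\<omega>_nondegenerate[OF X(1)] by blast
  moreover have "\<omega>2 a b = 0" if "b \<in> fvec n2" for b using nd[rule_format, of "join n1 vzero b"] X that by simp
  hence "a = vzero" using H2.\<omega>_nondegenerate[OF X(2)] by blast
  ultimately show ?thesis using X by (simp add: join_zero)
qed

lemma s\<omega>_pos: assumes u: "u \<in> fvec (n1+n2)" "u \<noteq> vzero" shows "s\<omega> u (sJ u) > 0"
proof -
  obtain X a where X: "X \<in> fvec n1" "a \<in> fvec n2" "u = join n1 X a" using u(1) by (rule fvec_add_cases)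
  have "X \<noteq> vzero \<or> a \<noteq> vzero" using X u(2) join_zero by auto
  thus ?thesis using X H1.g_pos[of X] H2.g_pos[of a] H1.g_nonneg[of X] H2.g_nonneg[of a] by (auto simp: metric_def)
qed

lemma semidirect_hermitian:
  assumes c1: "cond1 n1 n2 J1 J2 \<theta>"
  shows "hermitian_lie (n1+n2) sbr sJ s\<omega>"
  unfolding hermitian_lie_def metric_def
proof (intro conjI sd_lie sJ_lin s\<omega>_bilin)
  show "even (n1+n2)" using H1.even_dim H2.even_dim by simp
qed (use sJ_sJ sJ_integrable[OF c1] s\<omega>_anti s\<omega>_nondegenerate s\<omega>_J s\<omega>_sym s\<omega>_pos in blast)+


lemma tr_sJ_sbr:
  assumes "X \<in> fvec n1" "a \<in> fvec n2"
  shows "tr (n1+n2) (sJ \<circ> sbr (join n1 X a)) = tr n1 (J1 \<circ> br1 X) + tr n2 (J2 \<circ> \<theta> X)"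
  unfolding tr_fvec_add using assms by (simp add: join_first join_second tr_def)

lemma tr_sbr:
  assumes "X \<in> fvec n1" "a \<in> fvec n2"
  shows "tr (n1+n2) (sbr (join n1 X a)) = tr n1 (br1 X) + tr n2 (\<theta> X)"
  unfolding tr_fvec_add using assms by (simp add: join_first join_second tr_def)

definition \<theta>_cr_form :: "vec \<Rightarrow> vec \<Rightarrow> real" where
  "\<theta>_cr_form X Y = - (1/2) * tr n2 (J2 \<circ> \<theta> (br1 X Y)) + (1/2) * tr n2 (\<theta> (J1 (br1 X Y)))"

lemma cr_form_semidirect:
  assumes "X \<in> fvec n1" "Y \<in> fvec n1" "a \<in> fvec n2" "b \<in> fvec n2"
  shows "cr_form (n1+n2) sbr sJ (join n1 X a) (join n1 Y b) = cr_form n1 br1 J1 X Y + \<theta>_cr_form X Y"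
  using assms by (simp add: cr_form_def \<theta>_cr_form_def tr_sJ_sbr tr_sbr algebra_simps)

lemma cond2_cr_form:
  assumes c2: "cond2 n1 n2 br1 J1 \<omega>1 J2 \<theta> c" and XY: "X \<in> fvec n1" "Y \<in> fvec n1"
  shows "cr_form n1 br1 J1 X Y + \<theta>_cr_form X Y = c * \<omega>1 X Y"
proof -
  obtain P1 P\<theta> where P1: "cr_operator n1 br1 J1 \<omega>1 P1" and P\<theta>: "P_theta_op n1 n2 br1 J1 \<omega>1 J2 \<theta> P\<theta>"
    and P1_eq: "\<forall>X\<in>fvec n1. P1 X = vsub (vsmul c X) (P\<theta> X)" using c2 unfolding cond2_def by blast
  have "P\<theta> X \<in> fvec n1" using P\<theta> XY unfolding P_theta_op_def lin_on_def by blast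
  hence "\<omega>1 (P1 X) Y = c * \<omega>1 X Y - \<omega>1 (P\<theta> X) Y" using P1_eq XY by simp
  moreover have "\<omega>1 (P1 X) Y = cr_form n1 br1 J1 X Y" using P1 XY unfolding cr_operator_def by simp
  moreover have "\<omega>1 (P\<theta> X) Y = \<theta>_cr_form X Y" using P\<theta> XY unfolding P_theta_op_def \<theta>_cr_form_def by simp
  ultimately show ?thesis by simp
qed

definition sd_P :: "real \<Rightarrow> vec \<Rightarrow> vec" where "sd_P c u = join n1 (vsmul c (pr1 n1 u)) vzero"

lemma sd_P_cr_operator:
  assumes c2: "cond2 n1 n2 br1 J1 \<omega>1 J2 \<theta> c"
  shows "cr_operator (n1+n2) sbr sJ s\<omega> (sd_P c)"
  unfolding cr_operator_def
proof
  show "lin_on (n1+n2) (n1+n2) (sd_P c)" unfolding lin_on_def ball_fvec_add sd_P_def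
    by (auto simp: join_ops) (simp_all add: vec_defs algebra_simps)
  show "\<forall>x\<in>fvec (n1+n2). \<forall>y\<in>fvec (n1+n2). s\<omega> (sd_P c x) y = cr_form (n1+n2) sbr sJ x y"
    unfolding ball_fvec_add sd_P_def using cr_form_semidirect cond2_cr_form[OF c2] by simp
qed

lemma cr_operator_unique:
  assumes c2: "cond2 n1 n2 br1 J1 \<omega>1 J2 \<theta> c"
    and P: "cr_operator (n1+n2) sbr sJ s\<omega> P" and u: "u \<in> fvec (n1+n2)"
  shows "P u = sd_P c u"
proof -
  note P' = sd_P_cr_operator[OF c2]
  have in1: "P u \<in> fvec (n1+n2)" "sd_P c u \<in> fvec (n1+n2)"
    using P P' u lin_in unfolding cr_operator_def by blast+
  have "\<forall>v\<in>fvec (n1+n2). s\<omega> (vsub (P u) (sd_P c u)) v = 0"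
    using P P' u in1 bilin_sub1[OF s\<omega>_bilin] unfolding cr_operator_def by simp
  hence "vsub (P u) (sd_P c u) = vzero" using s\<omega>_nondegenerate in1 by simp
  thus ?thesis by (simp add: vec_defs fun_eq_iff)
qed

text \<open>With \<open>D = 0 \<oplus> (-c)I\<close> the operator \<open>cI + D = cI \<oplus> 0\<close> is the Chern--Ricci operator.\<close>
definition sd_D :: "real \<Rightarrow> vec \<Rightarrow> vec" where "sd_D c u = join n1 vzero (vsmul (-c) (pr2 n1 u))"

lemma semidirect_cr_soliton:
  assumes c1: "cond1 n1 n2 J1 J2 \<theta>" and c2: "cond2 n1 n2 br1 J1 \<omega>1 J2 \<theta> c"
  shows "cr_soliton (n1+n2) sbr sJ s\<omega>"
  unfolding cr_soliton_def
proof (intro exI conjI)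
  show "cr_operator (n1+n2) sbr sJ s\<omega> (sd_P c)" by (rule sd_P_cr_operator[OF c2])
  have D: "lin_on (n1+n2) (n1+n2) (sd_D c)" unfolding lin_on_def ball_fvec_add sd_D_def
    by (auto simp: join_ops) (simp_all add: vec_defs algebra_simps)
  show "derivation (n1+n2) sbr (sd_D c)" unfolding derivation_def
  proof (intro conjI D)
    show "\<forall>x\<in>fvec (n1+n2). \<forall>y\<in>fvec (n1+n2). sd_D c (sbr x y) = vadd (sbr (sd_D c x) y) (sbr x (sd_D c y))"
      unfolding ball_fvec_add sd_D_def by (auto simp: join_ops join_eq_iff) (simp add: vec_defs fun_eq_iff algebra_simps)
  qed
  show "\<forall>x\<in>fvec (n1+n2). sd_D c (sJ x) = sJ (sd_D c x)"
    unfolding ball_fvec_add sd_D_def by auto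
  show "is_transpose (n1+n2) (metric s\<omega> sJ) (sd_D c) (sd_D c)"
    unfolding is_transpose_def metric_def using D unfolding ball_fvec_add sd_D_def by auto
  show "\<forall>x\<in>fvec (n1+n2). sd_P c x = vadd (vsmul c x) (vsmul (1/2) (vadd (sd_D c x) (sd_D c x)))"
    unfolding ball_fvec_add sd_D_def sd_P_def by (auto simp: join_ops join_eq_iff) (auto simp: vec_defs fun_eq_iff field_simps)
qed

lemma closed_form_semidirect_iff:
  "closed_form (n1+n2) sbr s\<omega> \<longleftrightarrow> closed_form n1 br1 \<omega>1 \<and> (\<forall>X\<in>fvec n1. in_sp n2 \<omega>2 (\<theta> X))"
proof -
  have expand: "s\<omega> (sbr (join n1 X a) (join n1 Y b)) (join n1 Z c) + s\<omega> (sbr (join n1 Y b) (join n1 Z c)) (join n1 X a)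
       + s\<omega> (sbr (join n1 Z c) (join n1 X a)) (join n1 Y b)
     = (\<omega>1 (br1 X Y) Z + \<omega>1 (br1 Y Z) X + \<omega>1 (br1 Z X) Y)
       + ((\<omega>2 (\<theta> X b) c - \<omega>2 (\<theta> X c) b) + (\<omega>2 (\<theta> Y c) a - \<omega>2 (\<theta> Y a) c) + (\<omega>2 (\<theta> Z a) b - \<omega>2 (\<theta> Z b) a))"
    if "X \<in> fvec n1" "Y \<in> fvec n1" "Z \<in> fvec n1" "a \<in> fvec n2" "b \<in> fvec n2" "c \<in> fvec n2" for X Y Z a b c
    using that by simp
  have sp_iff: "in_sp n2 \<omega>2 (\<theta> X) \<longleftrightarrow> (\<forall>b\<in>fvec n2. \<forall>c\<in>fvec n2. \<omega>2 (\<theta> X b) c - \<omega>2 (\<theta> X c) b = 0)"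
    if "X \<in> fvec n1" for X
  proof -
    have "\<omega>2 b (\<theta> X c) = - \<omega>2 (\<theta> X c) b" if "b \<in> fvec n2" "c \<in> fvec n2" for b c
      using H2.\<omega>_anti[of b "\<theta> X c"] that \<open>X \<in> fvec n1\<close> by simp
    thus ?thesis unfolding in_sp_def by simp
  qed
  show ?thesis
  proof
    assume h: "closed_form (n1+n2) sbr s\<omega>"
    have h': "s\<omega> (sbr (join n1 X a) (join n1 Y b)) (join n1 Z c) + s\<omega> (sbr (join n1 Y b) (join n1 Z c)) (join n1 X a)
       + s\<omega> (sbr (join n1 Z c) (join n1 X a)) (join n1 Y b) = 0"
      if "X \<in> fvec n1" "Y \<in> fvec n1" "Z \<in> fvec n1" "a \<in> fvec n2" "b \<in> fvec n2" "c \<in> fvec n2" for X Y Z a b c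
      using h[unfolded closed_form_def ball_fvec_add] that by blast
    have "closed_form n1 br1 \<omega>1" unfolding closed_form_def
      using h'[of _ _ _ vzero vzero vzero] expand[of _ _ _ vzero vzero vzero] by simp
    moreover have "in_sp n2 \<omega>2 (\<theta> X)" if "X \<in> fvec n1" for X
      using that h'[of X vzero vzero vzero] expand[of X vzero vzero vzero] sp_iff by simp
    ultimately show "closed_form n1 br1 \<omega>1 \<and> (\<forall>X\<in>fvec n1. in_sp n2 \<omega>2 (\<theta> X))" by blast
  next
    assume "closed_form n1 br1 \<omega>1 \<and> (\<forall>X\<in>fvec n1. in_sp n2 \<omega>2 (\<theta> X))"
    thus "closed_form (n1+n2) sbr s\<omega>" unfolding closed_form_def ball_fvec_add
      using expand sp_iff by simp
  qed
qed

end


section \<open>Structure of Chern--Ricci solitons\<close>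

locale soliton = hermitian +
  fixes P :: "vec \<Rightarrow> vec" and c :: real and D Dt :: "vec \<Rightarrow> vec"
  assumes P_cr: "cr_operator n br J \<omega> P" and D_derivation: "derivation n br D"
    and D_J: "\<forall>x\<in>fvec n. D (J x) = J (D x)" and Dt_transpose: "is_transpose n (metric \<omega> J) D Dt"
    and P_eq: "\<forall>x\<in>fvec n. P x = vadd (vsmul c x) (vsmul (1/2) (vadd (D x) (Dt x)))"
begin

lemma D_lin: "lin_on n n D" using D_derivation unfolding derivation_def by blast
lemma Dt_lin: "lin_on n n Dt" using Dt_transpose unfolding is_transpose_def by blast
lemma P_lin: "lin_on n n P" using P_cr unfolding cr_operator_def by blast
lemmas D_simps[simp] = lin_simps[OF D_lin] and Dt_simps[simp] = lin_simps[OF Dt_lin]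

lemma D_br: "x \<in> V \<Longrightarrow> y \<in> V \<Longrightarrow> D (br x y) = vadd (br (D x) y) (br x (D y))"
  using D_derivation unfolding derivation_def by blast
lemma D_J_comm: "x \<in> V \<Longrightarrow> D (J x) = J (D x)" using D_J by blast
lemma g_D: "x \<in> V \<Longrightarrow> y \<in> V \<Longrightarrow> g (D x) y = g x (Dt y)"
  using Dt_transpose unfolding is_transpose_def by blast
lemma g_Dt: "x \<in> V \<Longrightarrow> y \<in> V \<Longrightarrow> g (Dt x) y = g x (D y)"
  using g_D[of y x] g_sym[of x "D y"] g_sym[of y "Dt x"] by simp
lemma P_expand: "x \<in> V \<Longrightarrow> P x = vadd (vsmul c x) (vsmul (1/2) (vadd (D x) (Dt x)))" using P_eq by blast
lemma \<omega>_P: "x \<in> V \<Longrightarrow> y \<in> V \<Longrightarrow> \<omega> (P x) y = cr_form n br J x y" using P_cr unfolding cr_operator_def by blast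

lemma eq_if_g_self_zero: assumes "a \<in> V" "b \<in> V" "g (vsub a b) (vsub a b) = 0" shows "a = b"
proof -
  have "vsub a b = vzero" using g_self_eq_0 assms by simp
  thus ?thesis by (simp add: vec_defs fun_eq_iff)
qed

lemma Dt_J: assumes y: "y \<in> V" shows "Dt (J y) = J (Dt y)"
proof (rule eq_if_g_self_zero)
  show "Dt (J y) \<in> V" "J (Dt y) \<in> V" using y by simp_all
  define d where "d = vsub (Dt (J y)) (J (Dt y))"
  have d: "d \<in> V" unfolding d_def using y by simp
  have "g d (J (Dt y)) = - g (J d) (Dt y)" using g_J_skew d y by simp
  also have "\<dots> = - g (J (D d)) y" using g_D[of "J d" y] d y D_J_comm by simp
  also have "\<dots> = g (D d) (J y)" using g_J_skew[of "D d" y] d y by simp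
  also have "\<dots> = g d (Dt (J y))" using g_D d y by simp
  finally have "g d (J (Dt y)) = g d (Dt (J y))" .
  hence "g d d = 0" using d y unfolding d_def by simp
  thus "g (vsub (Dt (J y)) (J (Dt y))) (vsub (Dt (J y)) (J (Dt y))) = 0" unfolding d_def .
qed

lemma \<omega>_D: assumes "u \<in> V" "y \<in> V" shows "\<omega> u (D y) = \<omega> (Dt u) y"
  using assms g_Dt[of u "J y"] \<omega>_eq_g[of u "D y"] \<omega>_eq_g[of "Dt u" y] D_J_comm by simp

lemma cr_functional_D: assumes U: "U \<in> V" shows "cr_functional (D U) = 0"
proof -
  have ad_D: "br (D W) z = vsub (D (br W z)) (br W (D z))" if "W \<in> V" "z \<in> V" for W z
    using D_br[OF that] by (simp add: vec_defs fun_eq_iff)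
  have "tr n (J \<circ> br (D U)) = tr n (\<lambda>z. vsub (D ((J \<circ> br U) z)) ((J \<circ> br U) (D z)))"
    by (rule tr_cong) (use U ad_D D_J_comm in simp)
  also have "\<dots> = 0" by (rule tr_commutator[OF D_lin lin_comp[OF br_lin[OF U] J_lin]])
  finally have 1: "tr n (J \<circ> br (D U)) = 0" .
  have "tr n (br (J (D U))) = tr n (\<lambda>z. vsub (D (br (J U) z)) (br (J U) (D z)))"
    by (rule tr_cong) (use U ad_D D_J_comm[of U, symmetric] in simp)
  also have "\<dots> = 0" by (rule tr_commutator[OF D_lin br_lin]) (use U in simp)
  finally have 2: "tr n (br (J (D U))) = 0" .
  show ?thesis unfolding cr_functional_def 1 2 by simp
qed

lemma P_D: assumes x: "x \<in> V" shows "P (D x) = vsmul (-1) (Dt (P x))"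
proof -
  have "\<omega> (vadd (P (D x)) (Dt (P x))) y = 0" if y: "y \<in> V" for y
  proof -
    have "\<omega> (vadd (P (D x)) (Dt (P x))) y = \<omega> (P (D x)) y + \<omega> (P x) (D y)"
      using x y lin_in[OF P_lin] \<omega>_D by simp
    also have "\<dots> = cr_functional (D (br x y))"
      using x y \<omega>_P D_br by (simp add: cr_form_functional cr_functional_add)
    finally show ?thesis using cr_functional_D x y by simp
  qed
  hence "vadd (P (D x)) (Dt (P x)) = vzero" by (intro \<omega>_nondegenerate) (use x lin_in[OF P_lin] in simp_all)
  thus ?thesis by (simp add: vec_defs fun_eq_iff add_eq_0_iff)
qed

definition Dsym :: "vec \<Rightarrow> vec" where "Dsym x = vsmul (1/2) (vadd (D x) (Dt x))"
definition Dskew :: "vec \<Rightarrow> vec" where "Dskew x = vsmul (1/2) (vsub (D x) (Dt x))"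

text \<open>Since \<open>P = cI + Dsym\<close>, this is \<open>Dsym \<circ> P\<close>; it vanishes because it is a symmetric
  commutator \<open>[Dskew, Dsym]/2\<close> (by \<open>PD = -D\<^sup>tP\<close>), whose square has trace zero.\<close>
definition K :: "vec \<Rightarrow> vec" where "K x = vadd (Dsym (Dsym x)) (vsmul c (Dsym x))"

lemma Dsym_lin: "lin_on n n Dsym" unfolding lin_on_def Dsym_def by (simp; simp add: vec_defs algebra_simps)
lemma Dskew_lin: "lin_on n n Dskew" unfolding lin_on_def Dskew_def by (simp; simp add: vec_defs algebra_simps)
lemmas Dsym_simps[simp] = lin_simps[OF Dsym_lin] and Dskew_simps[simp] = lin_simps[OF Dskew_lin]
lemma K_lin: "lin_on n n K" unfolding lin_on_def K_def by (simp; simp add: vec_defs algebra_simps)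
lemmas K_simps[simp] = lin_simps[OF K_lin]

lemma D_split: "x \<in> V \<Longrightarrow> D x = vadd (Dsym x) (Dskew x)"
  unfolding Dsym_def Dskew_def by (simp add: vec_defs algebra_simps)

lemma Dskew_eq_sub: "Dskew x = vsub (D x) (Dsym x)"
  unfolding Dsym_def Dskew_def by (simp add: vec_defs algebra_simps)

lemma g_Dsym: "x \<in> V \<Longrightarrow> y \<in> V \<Longrightarrow> g (Dsym x) y = g x (Dsym y)"
  unfolding Dsym_def using g_D g_Dt by (simp add: algebra_simps)
lemma g_Dskew: "x \<in> V \<Longrightarrow> y \<in> V \<Longrightarrow> g (Dskew x) y = - g x (Dskew y)"
  unfolding Dskew_def using g_D g_Dt by (simp add: algebra_simps)
lemma g_K: "x \<in> V \<Longrightarrow> y \<in> V \<Longrightarrow> g (K x) y = g x (K y)"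
  unfolding K_def using g_Dsym by simp

lemma Dsym_J: "x \<in> V \<Longrightarrow> Dsym (J x) = J (Dsym x)" unfolding Dsym_def by (simp add: D_J_comm Dt_J)

lemma K_commutator: assumes x: "x \<in> V" shows "K x = vsmul (1/2) (vsub (Dskew (Dsym x)) (Dsym (Dskew x)))"
proof -
  have "vadd (vsmul c (D x)) (vsmul (1/2) (vadd (D (D x)) (Dt (D x))))
      = vsmul (-1) (vadd (vsmul c (Dt x)) (vsmul (1/2) (vadd (Dt (D x)) (Dt (Dt x)))))"
    using P_D[OF x] x by (simp add: P_expand)
  hence pdi: "c * D x i + 1/2 * (D (D x) i + Dt (D x) i) = - (c * Dt x i + 1/2 * (Dt (D x) i + Dt (Dt x) i))"
    for i by (simp add: vec_defs fun_eq_iff)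
  show ?thesis
    apply (simp add: K_def Dsym_def Dskew_def x)
    apply (simp add: vec_defs fun_eq_iff)
    apply (rule allI)
    subgoal for i using pdi[of i] by (simp add: field_simps)
    done
qed

lemma tr_K_K: "tr n (K \<circ> K) = 0"
proof -
  have "tr n (K \<circ> K) = tr n (\<lambda>x. vsmul (1/2) (vsub (K (Dskew (Dsym x))) (K (Dsym (Dskew x)))))"
  proof (rule tr_cong)
    fix x assume x: "x \<in> V"
    show "(K \<circ> K) x = vsmul (1/2) (vsub (K (Dskew (Dsym x))) (K (Dsym (Dskew x))))"
      using K_commutator[OF x] x by simp
  qed
  also have "\<dots> = (1/2) * (tr n ((K \<circ> Dskew) \<circ> Dsym) - tr n (K \<circ> Dsym \<circ> Dskew))"
    by (simp add: tr_smul tr_sub[of n "\<lambda>x. K (Dskew (Dsym x))" "\<lambda>x. K (Dsym (Dskew x))", simplified] comp_def)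
  also have "tr n ((K \<circ> Dskew) \<circ> Dsym) = tr n (Dsym \<circ> (K \<circ> Dskew))"
    by (rule tr_comp_commute) (simp_all add: Dsym_lin lin_comp[OF Dskew_lin K_lin])
  also have "\<dots> = tr n (K \<circ> Dsym \<circ> Dskew)" by (rule tr_cong) (simp add: K_def)
  finally show ?thesis by (simp add: comp_def)
qed

lemma K_zero: assumes x: "x \<in> V" shows "K x = vzero"
proof -
  obtain bs where b: "onb bs" by (rule onb_exists)
  have bV: "\<And>k. k < length bs \<Longrightarrow> bs!k \<in> V" using b orthonormal_in unfolding onb_def by blast
  have "(\<Sum>k<length bs. g (K (bs!k)) (K (bs!k))) = tr n (K \<circ> K)"
    using tr_onb[OF b lin_comp[OF K_lin K_lin]] g_K bV by simp
  hence "(\<Sum>k<length bs. g (K (bs!k)) (K (bs!k))) = 0" using tr_K_K by simp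
  hence "g (K (bs!k)) (K (bs!k)) = 0" if "k < length bs" for k
    using that g_nonneg bV by (subst (asm) sum_nonneg_eq_0_iff) auto
  hence "K (bs!k) = vzero" if "k < length bs" for k using that g_self_eq_0 bV by simp
  thus ?thesis by (rule lin_zero_on_onb[OF b K_lin _ x])
qed

lemma Dsym_Dsym: "x \<in> V \<Longrightarrow> Dsym (Dsym x) = vsmul (-c) (Dsym x)"
  using K_zero[of x] unfolding K_def by (simp add: vec_defs fun_eq_iff add_eq_0_iff)

lemma Dskew_Dsym: "x \<in> V \<Longrightarrow> Dskew (Dsym x) = Dsym (Dskew x)"
  using K_zero[of x] K_commutator[of x] by (simp add: vec_defs fun_eq_iff)

lemma Dsym_zero_if_c_zero: assumes "c = 0" "x \<in> V" shows "Dsym x = vzero"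
proof -
  have "g (Dsym x) (Dsym x) = 0" using g_Dsym[of x "Dsym x"] Dsym_Dsym assms by simp
  thus ?thesis using g_self_eq_0 assms by simp
qed


text \<open>The splitting \<open>g = ker Dsym \<oplus> im Dsym\<close>: by \<open>Dsym\<^sup>2 = -c Dsym\<close> the two projections
  are \<open>I + Dsym/c\<close> and \<open>-Dsym/c\<close>. For \<open>c = 0\<close> one has \<open>Dsym = 0\<close>, and with \<open>1/0 = 0\<close>
  the same formulas give \<open>I\<close> and \<open>0\<close>.\<close>
definition \<pi>1 :: "vec \<Rightarrow> vec" where "\<pi>1 x = vadd x (vsmul (1/c) (Dsym x))"
definition \<pi>2 :: "vec \<Rightarrow> vec" where "\<pi>2 x = vsmul (- (1/c)) (Dsym x)"

lemma \<pi>1_lin: "lin_on n n \<pi>1" unfolding lin_on_def \<pi>1_def by (simp; simp add: vec_defs algebra_simps)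
lemma \<pi>2_lin: "lin_on n n \<pi>2" unfolding lin_on_def \<pi>2_def by (simp; simp add: vec_defs algebra_simps)
lemmas \<pi>1_simps[simp] = lin_simps[OF \<pi>1_lin] and \<pi>2_simps[simp] = lin_simps[OF \<pi>2_lin]

lemma \<pi>1_add_\<pi>2: "x \<in> V \<Longrightarrow> vadd (\<pi>1 x) (\<pi>2 x) = x" unfolding \<pi>1_def \<pi>2_def by (simp add: vec_defs)

lemma \<pi>2_eq_if_\<pi>1_zero: "x \<in> V \<Longrightarrow> \<pi>1 x = vzero \<Longrightarrow> \<pi>2 x = x"
  using \<pi>1_add_\<pi>2[of x] by simp

lemma Dsym_\<pi>1[simp]: "x \<in> V \<Longrightarrow> Dsym (\<pi>1 x) = vzero"
  using Dsym_zero_if_c_zero[of x] unfolding \<pi>1_def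
  by (cases "c = 0") (simp_all add: Dsym_Dsym, simp add: vec_defs)
lemma Dsym_\<pi>2[simp]: "x \<in> V \<Longrightarrow> Dsym (\<pi>2 x) = vsmul (-c) (\<pi>2 x)"
  using Dsym_zero_if_c_zero[of x] unfolding \<pi>2_def
  by (cases "c = 0") (simp_all add: Dsym_Dsym, simp add: vec_defs)
lemma \<pi>1_\<pi>1[simp]: "x \<in> V \<Longrightarrow> \<pi>1 (\<pi>1 x) = \<pi>1 x" by (subst \<pi>1_def) simp
lemma \<pi>2_zero_if_c_zero: "c = 0 \<Longrightarrow> \<pi>2 x = vzero" unfolding \<pi>2_def by simp

lemma \<pi>1_\<pi>2[simp]: assumes x: "x \<in> V" shows "\<pi>1 (\<pi>2 x) = vzero"
proof -
  have "\<pi>1 (\<pi>2 x) = vadd (\<pi>2 x) (vsmul (1/c) (vsmul (-c) (\<pi>2 x)))" using x by (subst \<pi>1_def) simp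
  thus ?thesis using \<pi>2_zero_if_c_zero[of x] by (cases "c = 0") (simp_all add: vec_defs)
qed

lemma \<pi>1_Dsym: "x \<in> V \<Longrightarrow> \<pi>1 (Dsym x) = Dsym (\<pi>1 x)" unfolding \<pi>1_def by simp
lemma \<pi>2_Dsym: "x \<in> V \<Longrightarrow> \<pi>2 (Dsym x) = Dsym (\<pi>2 x)" unfolding \<pi>2_def by simp

lemma Dskew_\<pi>1: "x \<in> V \<Longrightarrow> Dskew (\<pi>1 x) = \<pi>1 (Dskew x)" unfolding \<pi>1_def by (simp add: Dskew_Dsym)
lemma Dskew_\<pi>2: "x \<in> V \<Longrightarrow> Dskew (\<pi>2 x) = \<pi>2 (Dskew x)" unfolding \<pi>2_def by (simp add: Dskew_Dsym)
lemma J_\<pi>1: "x \<in> V \<Longrightarrow> J (\<pi>1 x) = \<pi>1 (J x)" unfolding \<pi>1_def by (simp add: Dsym_J)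
lemma g_\<pi>1: "x \<in> V \<Longrightarrow> y \<in> V \<Longrightarrow> g (\<pi>1 x) y = g x (\<pi>1 y)" unfolding \<pi>1_def by (simp add: g_Dsym)

lemma g_\<pi>1_orth: "x \<in> V \<Longrightarrow> y \<in> V \<Longrightarrow> \<pi>1 x = x \<Longrightarrow> \<pi>1 y = vzero \<Longrightarrow> g x y = 0"
  using g_\<pi>1[of x y] by simp

lemma P_\<pi>1: "x \<in> V \<Longrightarrow> P x = vsmul c (\<pi>1 x)"
  using P_expand[of x] Dsym_zero_if_c_zero[of x] unfolding \<pi>1_def Dsym_def
  by (cases "c = 0") (simp_all add: vec_defs fun_eq_iff algebra_simps)

definition eigenprojection :: "(vec \<Rightarrow> vec) \<Rightarrow> real \<Rightarrow> bool" where
  "eigenprojection R \<mu> \<longleftrightarrow> lin_on n n R \<and> (\<forall>x\<in>V. Dskew (R x) = R (Dskew x) \<and>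
     Dsym (R x) = vsmul (-\<mu>) (R x) \<and> R (Dsym x) = vsmul (-\<mu>) (R x))"

lemma eigenprojection_\<pi>1: "eigenprojection \<pi>1 0"
  unfolding eigenprojection_def by (simp add: \<pi>1_lin Dskew_\<pi>1 \<pi>1_Dsym)
lemma eigenprojection_\<pi>2: "eigenprojection \<pi>2 c"
  unfolding eigenprojection_def by (simp add: \<pi>2_lin Dskew_\<pi>2 \<pi>2_Dsym)

text \<open>\<open>\<beta>(x,y) = R[Sx,Ty]\<close> satisfies \<open>Dskew \<circ> \<beta> + (\<mu>\<^sub>S+\<mu>\<^sub>T-\<mu>\<^sub>R)\<beta> = \<beta>(Dskew\<cdot>,\<cdot>) + \<beta>(\<cdot>,Dskew\<cdot>)\<close>
  since \<open>D\<close> is a derivation, so the \<open>D\<close>-eigenvalues of the three factors must match.\<close>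
lemma eigenprojection_bracket_zero:
  assumes R: "eigenprojection R \<mu>R" and S: "eigenprojection S \<mu>S" and T: "eigenprojection T \<mu>T"
    and \<mu>: "\<mu>S + \<mu>T \<noteq> \<mu>R" and x: "x \<in> V" and y: "y \<in> V"
  shows "R (br (S x) (T y)) = vzero"
proof -
  have lin: "lin_on n n R" "lin_on n n S" "lin_on n n T" using R S T unfolding eigenprojection_def by blast+
  note simps = lin_simps[OF lin(1)] lin_simps[OF lin(2)] lin_simps[OF lin(3)]
  have D_eig: "D (Q x) = vadd (vsmul (-\<mu>) (Q x)) (Q (Dskew x))" if Q: "eigenprojection Q \<mu>" and x: "x \<in> V" for Q \<mu> x
  proof -
    have "lin_on n n Q" "Dskew (Q x) = Q (Dskew x)" "Dsym (Q x) = vsmul (-\<mu>) (Q x)"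
      using Q x unfolding eigenprojection_def by blast+
    thus ?thesis using D_split[OF lin_in[OF _ x]] by simp
  qed
  define \<beta> where "\<beta> x y = R (br (S x) (T y))" for x y
  obtain bs where b: "onb bs" by (rule onb_exists)
  have "\<beta> x y = vzero"
  proof (rule bilin_skew_eigen_zero[OF b Dskew_lin g_Dskew _ _ _ _ x y])
    show "lin_on n n (\<lambda>x. \<beta> x y)" if "y \<in> V" for y
      unfolding \<beta>_def lin_on_def using that by (simp add: simps)
    show "lin_on n n (\<beta> x)" if "x \<in> V" for x
      unfolding \<beta>_def lin_on_def using that by (simp add: simps)
    show "\<mu>S + \<mu>T - \<mu>R \<noteq> 0" using \<mu> by simp
    fix x y assume xy: "x \<in> V" "y \<in> V"
    define w where "w = br (S x) (T y)"
    have w: "w \<in> V" unfolding w_def using xy by (simp add: simps)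
    have "Dskew (\<beta> x y) = R (Dskew w)" unfolding \<beta>_def w_def[symmetric] using R w unfolding eigenprojection_def by blast
    also have "\<dots> = vsub (R (D w)) (R (Dsym w))"
      using lin_sub[OF lin(1), of "D w" "Dsym w"] w by (simp add: Dskew_eq_sub)
    also have "R (Dsym w) = vsmul (-\<mu>R) (\<beta> x y)" using R w unfolding \<beta>_def w_def[symmetric] eigenprojection_def by blast
    also have "R (D w) = vadd (vsmul (-(\<mu>S + \<mu>T)) (\<beta> x y)) (vadd (\<beta> (Dskew x) y) (\<beta> x (Dskew y)))"
      unfolding w_def \<beta>_def using xy D_br D_eig[OF S] D_eig[OF T]
      by (simp add: simps) (simp add: vec_defs fun_eq_iff algebra_simps)
    finally show "vadd (Dskew (\<beta> x y)) (vsmul (\<mu>S + \<mu>T - \<mu>R) (\<beta> x y)) = vadd (\<beta> (Dskew x) y) (\<beta> x (Dskew y))"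
      by (simp add: vec_defs fun_eq_iff algebra_simps)
  qed
  thus ?thesis unfolding \<beta>_def .
qed

lemma bracket_\<pi>1_\<pi>1: assumes "x \<in> V" "y \<in> V" shows "\<pi>2 (br (\<pi>1 x) (\<pi>1 y)) = vzero"
proof (cases "c = 0")
  case True thus ?thesis using \<pi>2_zero_if_c_zero by blast
next
  case False thus ?thesis
    using eigenprojection_bracket_zero[OF eigenprojection_\<pi>2 eigenprojection_\<pi>1 eigenprojection_\<pi>1] assms by simp
qed

lemma bracket_\<pi>1_\<pi>2: assumes "x \<in> V" "y \<in> V" shows "\<pi>1 (br (\<pi>1 x) (\<pi>2 y)) = vzero"
proof (cases "c = 0")
  case True
  have "\<pi>2 y = vzero" by (rule \<pi>2_zero_if_c_zero[OF True])
  thus ?thesis using assms by simp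
next
  case False thus ?thesis
    using eigenprojection_bracket_zero[OF eigenprojection_\<pi>1 eigenprojection_\<pi>1 eigenprojection_\<pi>2] assms by simp
qed

lemma bracket_\<pi>2_\<pi>2: assumes "x \<in> V" "y \<in> V" shows "br (\<pi>2 x) (\<pi>2 y) = vzero"
proof (cases "c = 0")
  case True thus ?thesis using \<pi>2_zero_if_c_zero[OF True] assms by simp
next
  case False
  have "\<pi>1 (br (\<pi>2 x) (\<pi>2 y)) = vzero" "\<pi>2 (br (\<pi>2 x) (\<pi>2 y)) = vzero"
    using eigenprojection_bracket_zero[OF eigenprojection_\<pi>1 eigenprojection_\<pi>2 eigenprojection_\<pi>2]
      eigenprojection_bracket_zero[OF eigenprojection_\<pi>2 eigenprojection_\<pi>2 eigenprojection_\<pi>2] False assms by auto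
  thus ?thesis using \<pi>1_add_\<pi>2[of "br (\<pi>2 x) (\<pi>2 y)"] assms by simp
qed

end


section \<open>Decomposition of a soliton\<close>

text \<open>A \<open>J\<close>-adapted orthonormal basis of \<open>g = ker Dsym \<oplus> im Dsym\<close>; its coordinates identify
  \<open>g\<close> with \<open>fvec n1 \<oplus> fvec n2\<close>.\<close>
locale decomposition = soliton +
  fixes bs1 bs2 :: "vec list"
  assumes on1: "orthonormal bs1" and in1: "\<And>k. k < length bs1 \<Longrightarrow> \<pi>1 (bs1!k) = bs1!k"
    and even1: "even (length bs1)" and span1: "\<And>w. w \<in> V \<Longrightarrow> \<pi>1 w = w \<Longrightarrow> proj bs1 w = w"
    and on2: "orthonormal bs2" and in2: "\<And>k. k < length bs2 \<Longrightarrow> \<pi>1 (bs2!k) = vzero"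
    and even2: "even (length bs2)" and span2: "\<And>w. w \<in> V \<Longrightarrow> \<pi>1 w = vzero \<Longrightarrow> proj bs2 w = w"
begin

abbreviation "n1 \<equiv> length bs1"
abbreviation "n2 \<equiv> length bs2"
abbreviation "\<iota>1 \<equiv> uncoord bs1"
abbreviation "\<iota>2 \<equiv> uncoord bs2"
abbreviation "\<kappa>1 \<equiv> coord bs1"
abbreviation "\<kappa>2 \<equiv> coord bs2"
abbreviation "\<phi> \<equiv> coord (bs1 @ bs2)"

lemma bs1_in: "k < n1 \<Longrightarrow> bs1!k \<in> V" using orthonormal_in on1 by blast
lemma bs2_in: "k < n2 \<Longrightarrow> bs2!k \<in> V" using orthonormal_in on2 by blast

lemma orthonormal_bs: "orthonormal (bs1 @ bs2)"
  unfolding orthonormal_append_iff using on1 on2 g_\<pi>1_orth bs1_in bs2_in in1 in2 by simp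

lemmas \<iota>1_simps[simp] = lin_simps[OF uncoord_lin[OF on1]] and \<iota>2_simps[simp] = lin_simps[OF uncoord_lin[OF on2]]
  and \<kappa>1_simps[simp] = lin_simps[OF coord_lin[OF on1]] and \<kappa>2_simps[simp] = lin_simps[OF coord_lin[OF on2]]

lemma \<kappa>1_\<iota>1[simp]: "X \<in> fvec n1 \<Longrightarrow> \<kappa>1 (\<iota>1 X) = X" using coord_uncoord[OF on1] by simp
lemma \<kappa>2_\<iota>2[simp]: "X \<in> fvec n2 \<Longrightarrow> \<kappa>2 (\<iota>2 X) = X" using coord_uncoord[OF on2] by simp

lemma \<pi>1_\<iota>1: "X \<in> fvec n1 \<Longrightarrow> \<pi>1 (\<iota>1 X) = \<iota>1 X"
  unfolding uncoord_def by (rule lin_fixes_vsum[OF \<pi>1_lin]) (auto simp: bs1_in in1)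

lemma \<pi>1_\<iota>2: "X \<in> fvec n2 \<Longrightarrow> \<pi>1 (\<iota>2 X) = vzero"
  unfolding uncoord_def using lin_vsum[OF \<pi>1_lin, of "{..<n2}" "\<lambda>k. bs2!k" X] bs2_in in2
  by (simp add: vsum_def vzero_def)

lemma \<pi>2_\<iota>2: "X \<in> fvec n2 \<Longrightarrow> \<pi>2 (\<iota>2 X) = \<iota>2 X"
  using \<pi>1_add_\<pi>2[of "\<iota>2 X"] \<pi>1_\<iota>2[of X] by simp

lemma \<iota>1_\<kappa>1: "w \<in> V \<Longrightarrow> \<pi>1 w = w \<Longrightarrow> \<iota>1 (\<kappa>1 w) = w" using uncoord_coord span1 by simp
lemma \<iota>2_\<kappa>2: "w \<in> V \<Longrightarrow> \<pi>1 w = vzero \<Longrightarrow> \<iota>2 (\<kappa>2 w) = w" using uncoord_coord span2 by simp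

lemma \<kappa>2_\<iota>1: "X \<in> fvec n1 \<Longrightarrow> \<kappa>2 (\<iota>1 X) = vzero"
  unfolding coord_def vzero_def using g_\<pi>1_orth[of "\<iota>1 X"] \<pi>1_\<iota>1 bs2_in in2 by (auto simp: fun_eq_iff)

lemma \<kappa>1_\<iota>2: "Z \<in> fvec n2 \<Longrightarrow> \<kappa>1 (\<iota>2 Z) = vzero"
  unfolding coord_def vzero_def
  using g_\<pi>1_orth[of "bs1!_" "\<iota>2 Z"] g_sym[of "\<iota>2 Z" "bs1!_"] \<pi>1_\<iota>2 bs1_in in1 by (auto simp: fun_eq_iff)

lemma onb_bs: "onb (bs1 @ bs2)"
  unfolding onb_def
proof (intro conjI ballI orthonormal_bs)
  fix x assume x: "x \<in> V"
  have "proj (bs1 @ bs2) (\<pi>1 x) = \<pi>1 x" using proj_append_fixed1[OF orthonormal_bs] span1 x by simp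
  moreover have "proj (bs1 @ bs2) (\<pi>2 x) = \<pi>2 x"
  proof (rule proj_append_fixed2[OF orthonormal_bs])
    show "\<pi>2 x \<in> V" "proj bs2 (\<pi>2 x) = \<pi>2 x" using x span2 by simp_all
    fix k assume k: "k < n1"
    show "g (\<pi>2 x) (bs1!k) = 0"
      using g_\<pi>1_orth[of "bs1!k" "\<pi>2 x"] g_sym[of "\<pi>2 x" "bs1!k"] bs1_in[OF k] in1[OF k] x by simp
  qed
  ultimately show "proj (bs1 @ bs2) x = x"
    using lin_add[OF proj_lin[OF orthonormal_bs], of "\<pi>1 x" "\<pi>2 x"] \<pi>1_add_\<pi>2 x by simp
qed

lemma decompose: "x \<in> V \<Longrightarrow> x = vadd (\<iota>1 (\<kappa>1 x)) (\<iota>2 (\<kappa>2 x))"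
  using onb_bs proj_append[of bs1 bs2 x] uncoord_coord unfolding onb_def by simp

lemma \<phi>_eq: "\<phi> x = join n1 (\<kappa>1 x) (\<kappa>2 x)" by (rule coord_append)

lemma \<phi>_sum: "X \<in> fvec n1 \<Longrightarrow> Z \<in> fvec n2 \<Longrightarrow> \<phi> (vadd (\<iota>1 X) (\<iota>2 Z)) = join n1 X Z"
  by (simp add: \<phi>_eq \<kappa>1_\<iota>2 \<kappa>2_\<iota>1)

definition br1 :: "vec \<Rightarrow> vec \<Rightarrow> vec" where "br1 X Y = \<kappa>1 (br (\<iota>1 X) (\<iota>1 Y))"
definition J1 :: "vec \<Rightarrow> vec" where "J1 X = \<kappa>1 (J (\<iota>1 X))"
definition \<omega>1 :: "vec \<Rightarrow> vec \<Rightarrow> real" where "\<omega>1 X Y = \<omega> (\<iota>1 X) (\<iota>1 Y)"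
definition J2 :: "vec \<Rightarrow> vec" where "J2 Z = \<kappa>2 (J (\<iota>2 Z))"
definition \<omega>2 :: "vec \<Rightarrow> vec \<Rightarrow> real" where "\<omega>2 Z W = \<omega> (\<iota>2 Z) (\<iota>2 W)"
definition \<theta> :: "vec \<Rightarrow> vec \<Rightarrow> vec" where "\<theta> X Z = \<kappa>2 (br (\<iota>1 X) (\<iota>2 Z))"

lemma br1_in[simp]: "X \<in> fvec n1 \<Longrightarrow> Y \<in> fvec n1 \<Longrightarrow> br1 X Y \<in> fvec n1" unfolding br1_def by simp
lemma J1_in[simp]: "X \<in> fvec n1 \<Longrightarrow> J1 X \<in> fvec n1" unfolding J1_def by simp
lemma J2_in[simp]: "Z \<in> fvec n2 \<Longrightarrow> J2 Z \<in> fvec n2" unfolding J2_def by simp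
lemma \<theta>_in[simp]: "X \<in> fvec n1 \<Longrightarrow> Z \<in> fvec n2 \<Longrightarrow> \<theta> X Z \<in> fvec n2" unfolding \<theta>_def by simp

lemma \<iota>1_br1: "X \<in> fvec n1 \<Longrightarrow> Y \<in> fvec n1 \<Longrightarrow> \<iota>1 (br1 X Y) = br (\<iota>1 X) (\<iota>1 Y)"
  unfolding br1_def using bracket_\<pi>1_\<pi>1[of "\<iota>1 X" "\<iota>1 Y"] \<pi>1_add_\<pi>2[of "br (\<iota>1 X) (\<iota>1 Y)"] \<pi>1_\<iota>1
  by (simp add: \<iota>1_\<kappa>1)
lemma \<iota>1_J1: "X \<in> fvec n1 \<Longrightarrow> \<iota>1 (J1 X) = J (\<iota>1 X)"
  unfolding J1_def using J_\<pi>1[of "\<iota>1 X"] \<pi>1_\<iota>1 by (simp add: \<iota>1_\<kappa>1)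
lemma \<iota>2_J2: "Z \<in> fvec n2 \<Longrightarrow> \<iota>2 (J2 Z) = J (\<iota>2 Z)"
  unfolding J2_def using J_\<pi>1[of "\<iota>2 Z"] \<pi>1_\<iota>2 by (simp add: \<iota>2_\<kappa>2)
lemma \<iota>2_\<theta>: "X \<in> fvec n1 \<Longrightarrow> Z \<in> fvec n2 \<Longrightarrow> \<iota>2 (\<theta> X Z) = br (\<iota>1 X) (\<iota>2 Z)"
  unfolding \<theta>_def using bracket_\<pi>1_\<pi>2[of "\<iota>1 X" "\<iota>2 Z"] \<pi>1_\<iota>1 \<pi>2_\<iota>2 by (simp add: \<iota>2_\<kappa>2)
lemma br_\<iota>2_\<iota>2: "Z \<in> fvec n2 \<Longrightarrow> W \<in> fvec n2 \<Longrightarrow> br (\<iota>2 Z) (\<iota>2 W) = vzero"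
  using bracket_\<pi>2_\<pi>2[of "\<iota>2 Z" "\<iota>2 W"] \<pi>2_\<iota>2 by simp

lemma \<iota>1_inj: "inj_on \<iota>1 (fvec n1)" by (rule inj_on_inverseI[of _ \<kappa>1]) simp
lemma \<iota>2_inj: "inj_on \<iota>2 (fvec n2)" by (rule inj_on_inverseI[of _ \<kappa>2]) simp

lemma hermitian_lie_g1: "hermitian_lie n1 br1 J1 \<omega>1"
  using hermitian_lie_pullback[OF uncoord_lin[OF on1] \<iota>1_inj even1] \<iota>1_br1 \<iota>1_J1
  unfolding \<omega>1_def[abs_def] by (simp add: br1_def J1_def)

lemma hermitian_lie_g2: "hermitian_lie n2 zero_br J2 \<omega>2"
  using hermitian_lie_pullback[OF uncoord_lin[OF on2] \<iota>2_inj even2, of zero_br J2] \<iota>2_J2 br_\<iota>2_\<iota>2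
  unfolding \<omega>2_def[abs_def] by (simp add: zero_br_def J2_def)

lemma \<iota>2_eqI: "X \<in> fvec n2 \<Longrightarrow> Y \<in> fvec n2 \<Longrightarrow> \<iota>2 X = \<iota>2 Y \<Longrightarrow> X = Y"
  using \<iota>2_inj unfolding inj_on_def by blast

lemma representation_\<theta>: "representation n1 n2 br1 \<theta>"
  unfolding representation_def
proof (intro conjI ballI allI)
  fix X Y Z assume X: "X \<in> fvec n1" "Y \<in> fvec n1" and Z: "Z \<in> fvec n2"
  show "\<theta> (br1 X Y) Z = vsub (\<theta> X (\<theta> Y Z)) (\<theta> Y (\<theta> X Z))"
  proof (rule \<iota>2_eqI)
    show "\<theta> (br1 X Y) Z \<in> fvec n2" "vsub (\<theta> X (\<theta> Y Z)) (\<theta> Y (\<theta> X Z)) \<in> fvec n2"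
      using X Z by simp_all
    have abz: "\<iota>1 X \<in> V" "\<iota>1 Y \<in> V" "\<iota>2 Z \<in> V" using X Z by simp_all
    have "br (br (\<iota>1 X) (\<iota>1 Y)) (\<iota>2 Z) = vsub (br (\<iota>1 X) (br (\<iota>1 Y) (\<iota>2 Z))) (br (\<iota>1 Y) (br (\<iota>1 X) (\<iota>2 Z)))"
      using br_jacobi[OF abz] br_anti[of "\<iota>2 Z" "br (\<iota>1 X) (\<iota>1 Y)"] br_anti[of "\<iota>2 Z" "\<iota>1 X"] abz
      by simp (simp add: vec_defs fun_eq_iff algebra_simps)
    thus "\<iota>2 (\<theta> (br1 X Y) Z) = \<iota>2 (vsub (\<theta> X (\<theta> Y Z)) (\<theta> Y (\<theta> X Z)))"
      using X Z by (simp add: \<iota>2_\<theta> \<iota>1_br1)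
  qed
qed (auto simp: \<theta>_def lin_on_def)

lemma cond1_holds: "cond1 n1 n2 J1 J2 \<theta>"
  unfolding cond1_def
proof (intro ballI)
  fix X Z assume X: "X \<in> fvec n1" and Z: "Z \<in> fvec n2"
  show "vsub (\<theta> (J1 X) (J2 Z)) (J2 (\<theta> (J1 X) Z)) = J2 (vsub (\<theta> X (J2 Z)) (J2 (\<theta> X Z)))"
  proof (rule \<iota>2_eqI)
    show "vsub (\<theta> (J1 X) (J2 Z)) (J2 (\<theta> (J1 X) Z)) \<in> fvec n2" "J2 (vsub (\<theta> X (J2 Z)) (J2 (\<theta> X Z))) \<in> fvec n2"
      using X Z by simp_all
    have az: "\<iota>1 X \<in> V" "\<iota>2 Z \<in> V" using X Z by simp_all
    have "vsub (br (J (\<iota>1 X)) (J (\<iota>2 Z))) (J (br (J (\<iota>1 X)) (\<iota>2 Z))) =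
        vsub (J (br (\<iota>1 X) (J (\<iota>2 Z)))) (J (J (br (\<iota>1 X) (\<iota>2 Z))))"
      using J_integrable[OF az] J_J[of "br (\<iota>1 X) (\<iota>2 Z)"] az by (simp add: vec_defs fun_eq_iff)
    thus "\<iota>2 (vsub (\<theta> (J1 X) (J2 Z)) (J2 (\<theta> (J1 X) Z))) = \<iota>2 (J2 (vsub (\<theta> X (J2 Z)) (J2 (\<theta> X Z))))"
      using X Z by (simp add: \<iota>2_\<theta> \<iota>2_J2 \<iota>1_J1)
  qed
qed

sublocale S: semidirect n1 br1 J1 \<omega>1 n2 J2 \<omega>2 \<theta>
  by unfold_locales (rule hermitian_lie_g1, rule hermitian_lie_g2, rule representation_\<theta>)

lemma \<omega>_\<iota>1_\<iota>2: assumes "X \<in> fvec n1" "W \<in> fvec n2" shows "\<omega> (\<iota>1 X) (\<iota>2 W) = 0" "\<omega> (\<iota>2 W) (\<iota>1 X) = 0"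
proof -
  have "g (\<iota>1 X) (J (\<iota>2 W)) = 0"
    using g_\<pi>1_orth[of "\<iota>1 X" "J (\<iota>2 W)"] J_\<pi>1[of "\<iota>2 W"] \<pi>1_\<iota>1 \<pi>1_\<iota>2 assms by simp
  thus "\<omega> (\<iota>1 X) (\<iota>2 W) = 0" using \<omega>_eq_g assms by simp
  thus "\<omega> (\<iota>2 W) (\<iota>1 X) = 0" using \<omega>_anti[of "\<iota>2 W" "\<iota>1 X"] assms by simp
qed

lemma br_decompose: assumes X: "X \<in> fvec n1" "Y \<in> fvec n1" and Z: "Z \<in> fvec n2" "W \<in> fvec n2"
  shows "br (vadd (\<iota>1 X) (\<iota>2 Z)) (vadd (\<iota>1 Y) (\<iota>2 W)) = vadd (\<iota>1 (br1 X Y)) (\<iota>2 (vsub (\<theta> X W) (\<theta> Y Z)))"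
  using X Z br_anti[of "\<iota>2 Z" "\<iota>1 Y"] by (simp add: br_\<iota>2_\<iota>2 \<iota>1_br1 \<iota>2_\<theta>) (simp add: vec_defs fun_eq_iff)

lemma herm_iso_\<phi>: "herm_iso n br J \<omega> (n1+n2) (sd_br n1 br1 \<theta>) (sd_J n1 J1 J2) (sd_\<omega> n1 \<omega>1 \<omega>2) \<phi>"
  unfolding herm_iso_def
proof (intro conjI ballI)
  show "lin_on n (n1 + n2) \<phi>" using coord_lin[OF orthonormal_bs] by simp
  show "bij_betw \<phi> V (fvec (n1 + n2))" using coord_bij[OF onb_bs] by simp
next
  fix x y assume x: "x \<in> V" and y: "y \<in> V"
  have "\<phi> (br x y) = \<phi> (br (vadd (\<iota>1 (\<kappa>1 x)) (\<iota>2 (\<kappa>2 x))) (vadd (\<iota>1 (\<kappa>1 y)) (\<iota>2 (\<kappa>2 y))))"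
    using decompose[OF x] decompose[OF y] by simp
  also have "\<dots> = \<phi> (vadd (\<iota>1 (br1 (\<kappa>1 x) (\<kappa>1 y))) (\<iota>2 (vsub (\<theta> (\<kappa>1 x) (\<kappa>2 y)) (\<theta> (\<kappa>1 y) (\<kappa>2 x)))))"
    using x y by (subst br_decompose) simp_all
  also have "\<dots> = join n1 (br1 (\<kappa>1 x) (\<kappa>1 y)) (vsub (\<theta> (\<kappa>1 x) (\<kappa>2 y)) (\<theta> (\<kappa>1 y) (\<kappa>2 x)))"
    using x y by (intro \<phi>_sum) simp_all
  finally show "\<phi> (br x y) = sd_br n1 br1 \<theta> (\<phi> x) (\<phi> y)" using x y by (simp add: \<phi>_eq[of x] \<phi>_eq[of y])
  have "\<omega> x y = \<omega> (vadd (\<iota>1 (\<kappa>1 x)) (\<iota>2 (\<kappa>2 x))) (vadd (\<iota>1 (\<kappa>1 y)) (\<iota>2 (\<kappa>2 y)))"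
    using decompose[OF x] decompose[OF y] by simp
  also have "\<dots> = \<omega>1 (\<kappa>1 x) (\<kappa>1 y) + \<omega>2 (\<kappa>2 x) (\<kappa>2 y)"
    using x y \<omega>_\<iota>1_\<iota>2[of "\<kappa>1 x" "\<kappa>2 y"] \<omega>_\<iota>1_\<iota>2[of "\<kappa>1 y" "\<kappa>2 x"] unfolding \<omega>1_def \<omega>2_def by simp
  finally show "sd_\<omega> n1 \<omega>1 \<omega>2 (\<phi> x) (\<phi> y) = \<omega> x y" using x y by (simp add: \<phi>_eq[of x] \<phi>_eq[of y])
next
  fix x assume x: "x \<in> V"
  have "J x = vadd (\<iota>1 (J1 (\<kappa>1 x))) (\<iota>2 (J2 (\<kappa>2 x)))"
    using x by (subst decompose[OF x]) (simp add: \<iota>1_J1 \<iota>2_J2)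
  thus "\<phi> (J x) = sd_J n1 J1 J2 (\<phi> x)" using x by (simp add: \<phi>_sum \<phi>_eq[of x])
qed

lemma cr_form_g1: assumes X: "X \<in> fvec n1" and Y: "Y \<in> fvec n1"
  shows "cr_form n1 br1 J1 X Y + S.\<theta>_cr_form X Y = c * \<omega>1 X Y"
proof -
  have iso: "\<forall>x\<in>V. \<forall>y\<in>V. \<phi> (br x y) = sd_br n1 br1 \<theta> (\<phi> x) (\<phi> y)" "\<forall>x\<in>V. \<phi> (J x) = sd_J n1 J1 J2 (\<phi> x)"
    using herm_iso_\<phi> unfolding herm_iso_def by blast+
  have "cr_form n1 br1 J1 X Y + S.\<theta>_cr_form X Y = cr_form (n1+n2) S.sbr S.sJ (\<phi> (\<iota>1 X)) (\<phi> (\<iota>1 Y))"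
    using S.cr_form_semidirect[of X Y vzero vzero] \<phi>_sum[of X vzero] \<phi>_sum[of Y vzero] X Y by simp
  also have "\<dots> = cr_form n br J (\<iota>1 X) (\<iota>1 Y)"
    by (rule cr_form_iso[OF coord_lin[OF orthonormal_bs, simplified] uncoord_lin[OF orthonormal_bs, simplified]])
      (use onb_bs uncoord_coord coord_uncoord[OF orthonormal_bs] iso X Y in \<open>auto simp: onb_def\<close>)
  also have "\<dots> = c * \<omega>1 X Y" using \<omega>_P[symmetric] P_\<pi>1 \<pi>1_\<iota>1 X Y unfolding \<omega>1_def by simp
  finally show ?thesis .
qed

lemma cond2_holds: "cond2 n1 n2 br1 J1 \<omega>1 J2 \<theta> c"
proof -
  obtain P1 where P1: "cr_operator n1 br1 J1 \<omega>1 P1" by (rule S.H1.cr_operator_exists)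
  have P1_lin: "lin_on n1 n1 P1" using P1 unfolding cr_operator_def by blast
  define P\<theta> where "P\<theta> X = vsub (vsmul c X) (P1 X)" for X
  have "P_theta_op n1 n2 br1 J1 \<omega>1 J2 \<theta> P\<theta>"
    unfolding P_theta_op_def
  proof (intro conjI ballI)
    show "lin_on n1 n1 P\<theta>" unfolding lin_on_def P\<theta>_def using lin_simps[OF P1_lin]
      by simp (simp add: vec_defs algebra_simps)
    fix X Y assume X: "X \<in> fvec n1" and Y: "Y \<in> fvec n1"
    have "\<omega>1 (P\<theta> X) Y = c * \<omega>1 X Y - cr_form n1 br1 J1 X Y"
      using P1 X Y lin_in[OF P1_lin X] unfolding P\<theta>_def cr_operator_def by simp
    thus "\<omega>1 (P\<theta> X) Y = - (1/2) * tr n2 (J2 \<circ> \<theta> (br1 X Y)) + 1/2 * tr n2 (\<theta> (J1 (br1 X Y)))"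
      using cr_form_g1[OF X Y] unfolding S.\<theta>_cr_form_def by simp
  qed
  moreover have "\<forall>X\<in>fvec n1. P1 X = vsub (vsmul c X) (P\<theta> X)" unfolding P\<theta>_def by (simp add: vec_defs)
  ultimately show ?thesis unfolding cond2_def using P1 by blast
qed

end


context soliton
begin

lemma decomposition_exists: obtains bs1 bs2 where "decomposition n br J \<omega> P c D Dt bs1 bs2"
proof -
  have W1: "J_invariant_subspace {x \<in> V. \<pi>1 x = x}" and W2: "J_invariant_subspace {x \<in> V. \<pi>1 x = vzero}"
    unfolding J_invariant_subspace_def by (auto simp: J_\<pi>1[symmetric])
  obtain bs1 where bs1: "orthonormal bs1" "set bs1 \<subseteq> {x \<in> V. \<pi>1 x = x}" "even (length bs1)"
    "\<forall>w\<in>{x \<in> V. \<pi>1 x = x}. proj bs1 w = w"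
    by (rule J_orthonormal_basis_of_range[OF W1 \<pi>1_lin]) auto
  obtain bs2 where bs2: "orthonormal bs2" "set bs2 \<subseteq> {x \<in> V. \<pi>1 x = vzero}" "even (length bs2)"
    "\<forall>w\<in>{x \<in> V. \<pi>1 x = vzero}. proj bs2 w = w"
    by (rule J_orthonormal_basis_of_range[OF W2 \<pi>2_lin]) (auto simp: \<pi>2_eq_if_\<pi>1_zero)
  have "decomposition n br J \<omega> P c D Dt bs1 bs2"
  proof unfold_locales
    show "\<And>k. k < length bs1 \<Longrightarrow> \<pi>1 (bs1!k) = bs1!k" using bs1(2) nth_mem by blast
    show "\<And>k. k < length bs2 \<Longrightarrow> \<pi>1 (bs2!k) = vzero" using bs2(2) nth_mem by blast
  qed (use bs1 bs2 in auto)
  thus ?thesis by (rule that)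
qed

end

lemma semidirect_construction:
  assumes "hermitian_lie n1 br1 J1 \<omega>1" "hermitian_lie n2 zero_br J2 \<omega>2" "representation n1 n2 br1 \<theta>"
    and c1: "cond1 n1 n2 J1 J2 \<theta>" and c2: "cond2 n1 n2 br1 J1 \<omega>1 J2 \<theta> c"
  shows "hermitian_lie (n1+n2) (sd_br n1 br1 \<theta>) (sd_J n1 J1 J2) (sd_\<omega> n1 \<omega>1 \<omega>2) \<and>
    cr_soliton (n1+n2) (sd_br n1 br1 \<theta>) (sd_J n1 J1 J2) (sd_\<omega> n1 \<omega>1 \<omega>2) \<and>
    (\<forall>P. cr_operator (n1+n2) (sd_br n1 br1 \<theta>) (sd_J n1 J1 J2) (sd_\<omega> n1 \<omega>1 \<omega>2) P \<longrightarrow>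
       (\<forall>X\<in>fvec n1. P (join n1 X vzero) = vsmul c (join n1 X vzero)) \<and> (\<forall>Z\<in>fvec n2. P (join n1 vzero Z) = vzero)) \<and>
    (kaehler (n1+n2) (sd_br n1 br1 \<theta>) (sd_J n1 J1 J2) (sd_\<omega> n1 \<omega>1 \<omega>2) \<longleftrightarrow>
       closed_form n1 br1 \<omega>1 \<and> (\<forall>X\<in>fvec n1. in_sp n2 \<omega>2 (\<theta> X))) \<and>
    ((\<forall>X\<in>fvec n1. in_sp n2 \<omega>2 (\<theta> X)) \<longleftrightarrow>
       (\<forall>X\<in>fvec n1. is_transpose n2 (metric \<omega>2 J2) (\<theta> X) (J2 \<circ> \<theta> X \<circ> J2)))"
proof -
  interpret semidirect n1 br1 J1 \<omega>1 n2 J2 \<omega>2 \<theta> by unfold_locales (rule assms)+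
  show ?thesis
  proof (intro conjI allI impI ballI)
    fix P X assume P: "cr_operator (n1+n2) sbr sJ s\<omega> P" and X: "X \<in> fvec n1"
    show "P (join n1 X vzero) = vsmul c (join n1 X vzero)"
      using cr_operator_unique[OF c2 P, of "join n1 X vzero"] X unfolding sd_P_def by (simp add: join_smul)
  next
    fix P Z assume P: "cr_operator (n1+n2) sbr sJ s\<omega> P" and Z: "Z \<in> fvec n2"
    show "P (join n1 vzero Z) = vzero"
      using cr_operator_unique[OF c2 P, of "join n1 vzero Z"] Z unfolding sd_P_def by (simp add: join_zero)
  qed (use semidirect_hermitian[OF c1] semidirect_cr_soliton[OF c1 c2] closed_form_semidirect_iff
         H2.in_sp_iff_transpose[OF \<theta>_lin] in \<open>auto simp: kaehler_def\<close>)
qed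

lemma cr_soliton_semidirect_decomposition:
  assumes "hermitian_lie n br J \<omega>" "cr_soliton n br J \<omega>"
  shows "\<exists>n1 n2 br1 J1 \<omega>1 J2 \<omega>2 \<theta> c \<phi>.
     hermitian_lie n1 br1 J1 \<omega>1 \<and> hermitian_lie n2 zero_br J2 \<omega>2 \<and>
     representation n1 n2 br1 \<theta> \<and> cond1 n1 n2 J1 J2 \<theta> \<and> cond2 n1 n2 br1 J1 \<omega>1 J2 \<theta> c \<and>
     herm_iso n br J \<omega> (n1+n2) (sd_br n1 br1 \<theta>) (sd_J n1 J1 J2) (sd_\<omega> n1 \<omega>1 \<omega>2) \<phi>"
proof -
  obtain P c D Dt where "soliton n br J \<omega> P c D Dt"
    using assms unfolding cr_soliton_def soliton_def soliton_axioms_def hermitian_def by blast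
  then interpret soliton n br J \<omega> P c D Dt .
  obtain bs1 bs2 where "decomposition n br J \<omega> P c D Dt bs1 bs2" by (rule decomposition_exists)
  then interpret decomposition n br J \<omega> P c D Dt bs1 bs2 .
  show ?thesis using hermitian_lie_g1 hermitian_lie_g2 representation_\<theta> cond1_holds cond2_holds herm_iso_\<phi> by blast
qed

theorem corollary4p3:
  shows
  "(\<forall>n1 n2 br1 J1 \<omega>1 J2 \<omega>2 \<theta> c.
      hermitian_lie n1 br1 J1 \<omega>1 \<and> hermitian_lie n2 zero_br J2 \<omega>2 \<and>
      representation n1 n2 br1 \<theta> \<and> cond1 n1 n2 J1 J2 \<theta> \<and> cond2 n1 n2 br1 J1 \<omega>1 J2 \<theta> c \<longrightarrow>
        hermitian_lie (n1+n2) (sd_br n1 br1 \<theta>) (sd_J n1 J1 J2) (sd_\<omega> n1 \<omega>1 \<omega>2) \<and>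
        cr_soliton (n1+n2) (sd_br n1 br1 \<theta>) (sd_J n1 J1 J2) (sd_\<omega> n1 \<omega>1 \<omega>2) \<and>
        (\<forall>P. cr_operator (n1+n2) (sd_br n1 br1 \<theta>) (sd_J n1 J1 J2) (sd_\<omega> n1 \<omega>1 \<omega>2) P \<longrightarrow>
           (\<forall>X\<in>fvec n1. P (join n1 X vzero) = vsmul c (join n1 X vzero)) \<and>
           (\<forall>Z\<in>fvec n2. P (join n1 vzero Z) = vzero)) \<and>
        (kaehler (n1+n2) (sd_br n1 br1 \<theta>) (sd_J n1 J1 J2) (sd_\<omega> n1 \<omega>1 \<omega>2) \<longleftrightarrow>
           closed_form n1 br1 \<omega>1 \<and> (\<forall>X\<in>fvec n1. in_sp n2 \<omega>2 (\<theta> X))) \<and>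
        ((\<forall>X\<in>fvec n1. in_sp n2 \<omega>2 (\<theta> X)) \<longleftrightarrow>
           (\<forall>X\<in>fvec n1. is_transpose n2 (metric \<omega>2 J2) (\<theta> X) (J2 \<circ> \<theta> X \<circ> J2))))
   \<and>
   (\<forall>n br J \<omega>. hermitian_lie n br J \<omega> \<and> cr_soliton n br J \<omega> \<longrightarrow>
      (\<exists>n1 n2 br1 J1 \<omega>1 J2 \<omega>2 \<theta> c \<phi>.
         hermitian_lie n1 br1 J1 \<omega>1 \<and> hermitian_lie n2 zero_br J2 \<omega>2 \<and>
         representation n1 n2 br1 \<theta> \<and> cond1 n1 n2 J1 J2 \<theta> \<and> cond2 n1 n2 br1 J1 \<omega>1 J2 \<theta> c \<and>
         herm_iso n br J \<omega> (n1+n2) (sd_br n1 br1 \<theta>) (sd_J n1 J1 J2) (sd_\<omega> n1 \<omega>1 \<omega>2) \<phi>))"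
  by (rule conjI; intro allI impI; elim conjE;
      rule semidirect_construction cr_soliton_semidirect_decomposition; assumption)

end
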